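(* Consider a sequence of finite populations indexed by $n\to\infty$, each satisfying Assumption 1, Assumption 2 and the null hypothesis $H_0:\ T_i(1)=T_i(0)$ for all $i$, and suppose Condition 2 holds; condition on all potential event times. Let $\mathcal{K}_0=\{k:\lim_{n}d_k/n>0,\ \lim_nh_k<1,\ \lim_nG_1(t_k)>0,\ \lim_nG_0(t_k)>0\}$ (nonempty by Condition 2). For $1\le k\le K$: (i) if $k\in\mathcal{K}_0$, then $\lim_{n\to\infty}\mathbb{E}(V_k\mid\boldsymbol{T}(1),\boldsymbol{T}(0))/n>0$, $V_k/n=\mathbb{E}(V_k\mid\boldsymbol{T}(1),\boldsymbol{T}(0))/n+o_{\Pr}(1)$, $\mathbb{E}\big(\mathbb{1}(V_k>0)/V_k^{1/2}\mid\boldsymbol{T}(1),\boldsymbol{T}(0)\big)=o(1)$, and $\Pr(V_k=0\mid\boldsymbol{T}(1),\boldsymbol{T}(0))=o(1)$; (ii) otherwise, $\mathbb{E}(V_k\mid\boldsymbol{T}(1),\boldsymbol{T}(0))/n=o(1)$ and $V_k/n=o_{\Pr}(1)$.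
   Context: Unit $i$ ($1\le i\le n$) has potential event times $T_i(1),T_i(0)\ge 0$ (fixed constants), potential censoring times $C_i(1),C_i(0)\in[0,\infty]$, treatment indicator $Z_i\in\{0,1\}$; bold letters denote $n$-vectors. Assumption 1: conditional on all potential event and censoring times, the $Z_i$ are i.i.d. Bernoulli$(p_1)$, $p_1=1-p_0\in(0,1)$. Assumption 2: $(\boldsymbol{C}(1),\boldsymbol{C}(0))$ is independent of $(\boldsymbol{T}(1),\boldsymbol{T}(0))$ and the pairs $(C_i(1),C_i(0))$ are i.i.d. across $i$. $G_z(c)=\Pr(C_i(z)\ge c)$. Realized: $W_i=\min\{T_i,C_i\}$, $\Delta_i=\mathbb{1}(T_i\le C_i)$ with $T_i=Z_iT_i(1)+(1-Z_i)T_i(0)$, $C_i=Z_iC_i(1)+(1-Z_i)C_i(0)$. Let $t_1<\dots<t_K$ be the distinct values of $\{T_i(0)\}$, $d_k=\#\{i:T_i(0)=t_k\}$, $n_k=\#\{i:T_i(0)\ge t_k\}$, $h_k=d_k/n_k$; $N_{1k},N_{0k}$ the numbers of treated / control units with $W_i\ge t_k$, $N_k=N_{1k}+N_{0k}$, $D_k=\sum_i\Delta_i\mathbb{1}(W_i=t_k)$, $V_k=D_k(N_k-D_k)N_{1k}N_{0k}/\{N_k^2(N_k-1)\}$ (convention $0/0:=0$). Quantities may depend on $n$. Condition 2: as $n\to\infty$, $K$ is fixed, and for $z=0,1$, $1\le k\le K$: $p_z$ has a positive limit; $d_k/n$ has a limit; $G_z(t_k)$ has a limit; and for at least one $k$,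 $d_k/n$, $G_1(t_k)$, $G_0(t_k)$ have positive limits and $\lim h_k<1$. *)

theory Defs
  imports "HOL-Probability.Probability"
begin

text \<open>T1, T0 are the potential event times
 (only indices i < n are used). An outcome w assigns to unit i the triple
 (Z_i, (C_i(1), C_i(0))) with Z_i = True meaning treated.\<close>

type_synonym outcome = "nat \<Rightarrow> bool \<times> ereal \<times> ereal"

definition popM :: "nat \<Rightarrow> real \<Rightarrow> (ereal \<times> ereal) measure \<Rightarrow> outcome measure" where
  "popM n p1 Q = PiM {..<n} (\<lambda>_. measure_pmf (bernoulli_pmf p1) \<Otimes>\<^sub>M Q)"

definition Gsurv :: "(ereal \<times> ereal) measure \<Rightarrow> bool \<Rightarrow> real \<Rightarrow> real" where
  "Gsurv Q z c = measure Q {x \<in> space Q. ereal c \<le> (if z then fst x else snd x)}"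

definition tval :: "nat \<Rightarrow> (nat \<Rightarrow> real) \<Rightarrow> nat \<Rightarrow> real" where
  "tval n T0 k = sorted_list_of_set (T0 ` {..<n}) ! (k - 1)"

definition dcnt :: "nat \<Rightarrow> (nat \<Rightarrow> real) \<Rightarrow> nat \<Rightarrow> nat" where
  "dcnt n T0 k = card {i. i < n \<and> T0 i = tval n T0 k}"

definition ncnt :: "nat \<Rightarrow> (nat \<Rightarrow> real) \<Rightarrow> nat \<Rightarrow> nat" where
  "ncnt n T0 k = card {i. i < n \<and> T0 i \<ge> tval n T0 k}"

definition hrate :: "nat \<Rightarrow> (nat \<Rightarrow> real) \<Rightarrow> nat \<Rightarrow> real" where
  "hrate n T0 k = real (dcnt n T0 k) / real (ncnt n T0 k)"

definition Zt :: "outcome \<Rightarrow> nat \<Rightarrow> bool" where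
  "Zt w i = fst (w i)"

definition Cobs :: "outcome \<Rightarrow> nat \<Rightarrow> ereal" where
  "Cobs w i = (if fst (w i) then fst (snd (w i)) else snd (snd (w i)))"

definition Tobs :: "(nat \<Rightarrow> real) \<Rightarrow> (nat \<Rightarrow> real) \<Rightarrow> outcome \<Rightarrow> nat \<Rightarrow> real" where
  "Tobs T1 T0 w i = (if fst (w i) then T1 i else T0 i)"

definition Wobs :: "(nat \<Rightarrow> real) \<Rightarrow> (nat \<Rightarrow> real) \<Rightarrow> outcome \<Rightarrow> nat \<Rightarrow> ereal" where
  "Wobs T1 T0 w i = min (ereal (Tobs T1 T0 w i)) (Cobs w i)"

definition Dobs :: "(nat \<Rightarrow> real) \<Rightarrow> (nat \<Rightarrow> real) \<Rightarrow> outcome \<Rightarrow> nat \<Rightarrow> bool" where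
  "Dobs T1 T0 w i = (ereal (Tobs T1 T0 w i) \<le> Cobs w i)"

definition N1 :: "nat \<Rightarrow> (nat \<Rightarrow> real) \<Rightarrow> (nat \<Rightarrow> real) \<Rightarrow> nat \<Rightarrow> outcome \<Rightarrow> nat" where
  "N1 n T1 T0 k w = card {i. i < n \<and> Zt w i \<and> Wobs T1 T0 w i \<ge> ereal (tval n T0 k)}"

definition N0 :: "nat \<Rightarrow> (nat \<Rightarrow> real) \<Rightarrow> (nat \<Rightarrow> real) \<Rightarrow> nat \<Rightarrow> outcome \<Rightarrow> nat" where
  "N0 n T1 T0 k w = card {i. i < n \<and> \<not> Zt w i \<and> Wobs T1 T0 w i \<ge> ereal (tval n T0 k)}"

definition Dk :: "nat \<Rightarrow> (nat \<Rightarrow> real) \<Rightarrow> (nat \<Rightarrow> real) \<Rightarrow> nat \<Rightarrow> outcome \<Rightarrow> nat" where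
  "Dk n T1 T0 k w = card {i. i < n \<and> Dobs T1 T0 w i \<and> Wobs T1 T0 w i = ereal (tval n T0 k)}"

text \<open>V_k; Isabelle's x / 0 = 0 realises the convention 0/0 := 0
 (the denominator vanishes only when the numerator does).\<close>
definition Vk :: "nat \<Rightarrow> (nat \<Rightarrow> real) \<Rightarrow> (nat \<Rightarrow> real) \<Rightarrow> nat \<Rightarrow> outcome \<Rightarrow> real" where
  "Vk n T1 T0 k w =
    (let a = real (N1 n T1 T0 k w); b = real (N0 n T1 T0 k w); N = a + b;
         D = real (Dk n T1 T0 k w)
     in D * (N - D) * a * b / (N\<^sup>2 * (N - 1)))"

definition condition2 ::
  "(nat \<Rightarrow> real) \<Rightarrow> (nat \<Rightarrow> nat \<Rightarrow> real) \<Rightarrow> (nat \<Rightarrow> (ereal \<times> ereal) measure) \<Rightarrow> nat \<Rightarrow> bool" where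
  "condition2 p1 T0 Q K \<longleftrightarrow>
     (\<forall>\<^sub>F n in sequentially. card (T0 n ` {..<n}) = K) \<and>
     (\<exists>a>0. p1 \<longlonglongrightarrow> a) \<and> (\<exists>a>0. (\<lambda>n. 1 - p1 n) \<longlonglongrightarrow> a) \<and>
     (\<forall>k\<in>{1..K}. convergent (\<lambda>n. real (dcnt n (T0 n) k) / real n) \<and>
        convergent (\<lambda>n. Gsurv (Q n) True (tval n (T0 n) k)) \<and>
        convergent (\<lambda>n. Gsurv (Q n) False (tval n (T0 n) k))) \<and>
     (\<exists>k\<in>{1..K}. lim (\<lambda>n. real (dcnt n (T0 n) k) / real n) > 0 \<and>
        lim (\<lambda>n. Gsurv (Q n) True (tval n (T0 n) k)) > 0 \<and>
        lim (\<lambda>n. Gsurv (Q n) False (tval n (T0 n) k)) > 0 \<and>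
        lim (\<lambda>n. hrate n (T0 n) k) < 1)"

definition Kzero ::
  "(nat \<Rightarrow> nat \<Rightarrow> real) \<Rightarrow> (nat \<Rightarrow> (ereal \<times> ereal) measure) \<Rightarrow> nat \<Rightarrow> nat set" where
  "Kzero T0 Q K = {k \<in> {1..K}. lim (\<lambda>n. real (dcnt n (T0 n) k) / real n) > 0 \<and>
        lim (\<lambda>n. hrate n (T0 n) k) < 1 \<and>
        lim (\<lambda>n. Gsurv (Q n) True (tval n (T0 n) k)) > 0 \<and>
        lim (\<lambda>n. Gsurv (Q n) False (tval n (T0 n) k)) > 0}"

end

(*
  Under H0 the counts N_1, N_0 and D_k are sums over units of indicators of events that depend
  only on the unit's own (Z_i, C_i(1), C_i(0)), so by Hoeffding's inequality the fractions
  N_1/n, N_0/n, D_k/n concentrate exponentially fast around their means, whose limits are given by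
  Condition 2.  V_k/n is a function of these fractions and of 1/n that is continuous at the limit
  point, so it concentrates exponentially fast around a constant L, which is positive for k in K_0.
  Since 0 <= V_k <= n, and V_k >= 1/(2n) whenever V_k > 0, this yields the convergence of E V_k / n,
  the consistency of V_k / n, Pr(V_k = 0) -> 0, and
  E(1(V_k > 0) / sqrt V_k) <= sqrt (2/(L n)) + sqrt (2 n) * O(exp (- kappa n)) -> 0.
  For k not in K_0 one of the bounds V_k <= d_k, V_k <= n_k - d_k, V_k <= N_1, V_k <= N_0 has
  expectation o(n), and Markov's inequality gives the rest.
*)
theory Submission
  imports Defs "HOL-Real_Asymp.Real_Asymp"
begin

section \<open>Products of probability spaces and Hoeffding counts\<close>

lemma indep_vars_PiM_components:
  assumes M: "\<And>i. i \<in> I \<Longrightarrow> prob_space (M i)" and "finite I"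
  shows "prob_space.indep_vars (PiM I M) M (\<lambda>i \<omega>. \<omega> i) I"
proof -
  interpret P: prob_space "PiM I M" by (intro prob_space_PiM M)
  show ?thesis
  proof (cases "I = {}")
    case True
    then show ?thesis unfolding P.indep_vars_def P.indep_sets_def by simp
  next
    case False
    have "distr (PiM I M) (PiM I M) (\<lambda>\<omega>. restrict \<omega> I) = PiM I M"
      by (subst distr_cong[where g="\<lambda>\<omega>. \<omega>"]) (auto simp: space_PiM distr_id)
    also have "\<dots> = PiM I (\<lambda>i. distr (PiM I M) (M i) (\<lambda>\<omega>. \<omega> i))"
      using distr_PiM_component[of I M] M by (auto cong: PiM_cong)
    finally show ?thesis
      using False by (subst P.indep_vars_iff_distr_eq_PiM') auto
  qed
qed

lemma integral_PiM_component:
  fixes f :: "'a \<Rightarrow> real"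
  assumes M: "\<And>i. i \<in> I \<Longrightarrow> prob_space (M i)" and i: "i \<in> I" and f: "f \<in> borel_measurable (M i)"
  shows "(\<integral>\<omega>. f (\<omega> i) \<partial>PiM I M) = (\<integral>x. f x \<partial>M i)"
proof -
  have "(\<integral>\<omega>. f (\<omega> i) \<partial>PiM I M) = (\<integral>x. f x \<partial>distr (PiM I M) (M i) (\<lambda>\<omega>. \<omega> i))"
    using i f by (subst integral_distr) auto
  then show ?thesis
    using distr_PiM_component[of I M i] M i by simp
qed

lemma PiM_count_hoeffding:
  fixes \<mu> :: "'a measure" and B :: "'a set" and P :: "nat \<Rightarrow> bool" and n :: nat
  assumes \<mu>: "prob_space \<mu>" and B: "B \<in> sets \<mu>"
  defines "S \<equiv> \<lambda>\<omega>. real (card {i. i < n \<and> P i \<and> \<omega> i \<in> B})"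
  shows "S \<in> borel_measurable (PiM {..<n} (\<lambda>_. \<mu>))"
    and "(\<integral>\<omega>. S \<omega> \<partial>PiM {..<n} (\<lambda>_. \<mu>)) = real (card {i. i < n \<and> P i}) * measure \<mu> B"
    and "0 < n \<Longrightarrow> 0 \<le> e \<Longrightarrow> measure (PiM {..<n} (\<lambda>_. \<mu>))
           {\<omega> \<in> space (PiM {..<n} (\<lambda>_. \<mu>)). e \<le> \<bar>S \<omega> - real (card {i. i < n \<and> P i}) * measure \<mu> B\<bar>}
         \<le> 2 * exp (- 2 * e\<^sup>2 / real n)"
proof -
  let ?M = "PiM {..<n} (\<lambda>_. \<mu>)"
  interpret P: prob_space ?M by (intro prob_space_PiM \<mu>)
  define X where "X = (\<lambda>i \<omega>. if P i then indicator B (\<omega> i) else 0 :: real)"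
  have S_eq: "S = (\<lambda>\<omega>. \<Sum>i<n. X i \<omega>)"
  proof
    fix \<omega>
    have "(\<Sum>i<n. X i \<omega>) = (\<Sum>i<n. of_bool (P i \<and> \<omega> i \<in> B))"
      by (intro sum.cong) (auto simp: X_def)
    also have "\<dots> = real (card ({..<n} \<inter> {i. P i \<and> \<omega> i \<in> B}))"
      using sum_of_bool_eq[of "{..<n}" "\<lambda>i. P i \<and> \<omega> i \<in> B"] by simp
    finally show "S \<omega> = (\<Sum>i<n. X i \<omega>)"
      by (simp add: S_def Int_def)
  qed
  have X_measurable [measurable]: "X i \<in> borel_measurable ?M" if "i < n" for i
  proof (cases "P i")
    case True
    have "i \<in> {..<n}" using that by simp
    with True B show ?thesis unfolding X_def by measurable
  qed (simp add: X_def)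
  have X_integrable: "integrable ?M (X i)" if "i < n" for i
    by (rule P.integrable_const_bound[where B=1]) (use X_measurable[OF that] in \<open>auto simp: X_def\<close>)
  have EX: "P.expectation (X i) = (if P i then measure \<mu> B else 0)" if "i < n" for i
    using integral_PiM_component[OF \<mu>, of i "{..<n}" "indicator B"] that B
    by (simp add: X_def)
  have mean: "(\<Sum>i<n. P.expectation (X i)) = real (card {i. i < n \<and> P i}) * measure \<mu> B"
    by (simp add: EX sum.If_cases Int_def)
  show "S \<in> borel_measurable ?M"
    unfolding S_eq by measurable
  show "(\<integral>\<omega>. S \<omega> \<partial>?M) = real (card {i. i < n \<and> P i}) * measure \<mu> B"
    unfolding S_eq using X_integrable mean by (subst Bochner_Integration.integral_sum) auto
  assume "0 < n" "0 \<le> e"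
  have "P.indep_vars (\<lambda>_. borel) X {..<n}"
    unfolding X_def using B
    by (intro P.indep_vars_compose2[OF indep_vars_PiM_components[OF \<mu>]]) auto
  then interpret H: Hoeffding_ineq ?M "{..<n}" X "\<lambda>_. 0" "\<lambda>_. 1" "\<Sum>i<n. P.expectation (X i)"
    by unfold_locales (auto simp: X_def)
  show "measure ?M {\<omega> \<in> space ?M. e \<le> \<bar>S \<omega> - real (card {i. i < n \<and> P i}) * measure \<mu> B\<bar>}
      \<le> 2 * exp (- 2 * e\<^sup>2 / real n)"
    using H.Hoeffding_ineq_abs_ge[OF \<open>0 \<le> e\<close>] \<open>0 < n\<close> unfolding S_eq mean by simp
qed

section \<open>Exponential concentration\<close>

definition exp_concentrated :: "(nat \<Rightarrow> 'a measure) \<Rightarrow> (nat \<Rightarrow> 'a \<Rightarrow> 'b::metric_space) \<Rightarrow> 'b \<Rightarrow> bool" where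
  "exp_concentrated M X c \<longleftrightarrow> (\<forall>n. X n \<in> borel_measurable (M n)) \<and>
     (\<forall>\<epsilon>>0. \<exists>C \<kappa>. 0 < \<kappa> \<and>
        (\<forall>\<^sub>F n in sequentially. measure (M n) {\<omega> \<in> space (M n). \<epsilon> \<le> dist (X n \<omega>) c} \<le> C * exp (- \<kappa> * real n)))"

lemma exp_concentratedD:
  assumes "exp_concentrated M X c" "0 < \<epsilon>"
  obtains C \<kappa> where "0 < \<kappa>"
    "\<forall>\<^sub>F n in sequentially. measure (M n) {\<omega> \<in> space (M n). \<epsilon> \<le> dist (X n \<omega>) c} \<le> C * exp (- \<kappa> * real n)"
  using assms unfolding exp_concentrated_def by blast

lemma exp_concentrated_measurable:
  "exp_concentrated M X c \<Longrightarrow> X n \<in> borel_measurable (M n)"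
  unfolding exp_concentrated_def by blast

lemma exp_concentrated_deterministic:
  assumes "a \<longlonglongrightarrow> c"
  shows "exp_concentrated M (\<lambda>n _. a n) c"
  unfolding exp_concentrated_def
proof (intro conjI allI impI)
  fix \<epsilon> :: real assume "0 < \<epsilon>"
  then have "\<forall>\<^sub>F n in sequentially. dist (a n) c < \<epsilon>"
    using assms by (rule tendstoD[rotated])
  then have "\<forall>\<^sub>F n in sequentially.
      measure (M n) {\<omega> \<in> space (M n). \<epsilon> \<le> dist (a n) c} \<le> 0 * exp (- 1 * real n)"
    by eventually_elim simp
  then show "\<exists>C \<kappa>. 0 < \<kappa> \<and> (\<forall>\<^sub>F n in sequentially.
      measure (M n) {\<omega> \<in> space (M n). \<epsilon> \<le> dist (a n) c} \<le> C * exp (- \<kappa> * real n))"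
    by (intro exI[of _ 0] exI[of _ 1]) simp
qed simp

context
  fixes M :: "nat \<Rightarrow> 'a measure"
  assumes prob_space_M: "\<And>n. prob_space (M n)"
begin

lemma exp_concentrated_tendsto_measure:
  assumes "exp_concentrated M X c" "0 < \<epsilon>"
  shows "(\<lambda>n. measure (M n) {\<omega> \<in> space (M n). \<epsilon> \<le> dist (X n \<omega>) c}) \<longlonglongrightarrow> 0"
proof -
  obtain C \<kappa> where "0 < \<kappa>" and bound:
    "\<forall>\<^sub>F n in sequentially. measure (M n) {\<omega> \<in> space (M n). \<epsilon> \<le> dist (X n \<omega>) c} \<le> C * exp (- \<kappa> * real n)"
    using exp_concentratedD[OF assms] .
  have "(\<lambda>n. exp (- \<kappa> * real n)) \<longlonglongrightarrow> 0"
    using \<open>0 < \<kappa>\<close> by real_asymp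
  then have decay: "(\<lambda>n. C * exp (- \<kappa> * real n)) \<longlonglongrightarrow> 0"
    by (rule tendsto_mult_right_zero)
  have nonneg: "\<forall>\<^sub>F n in sequentially. 0 \<le> measure (M n) {\<omega> \<in> space (M n). \<epsilon> \<le> dist (X n \<omega>) c}"
    by simp
  show ?thesis
    by (rule tendsto_sandwich[OF nonneg bound tendsto_const decay])
qed

lemma exp_concentrated_Pair:
  fixes X :: "nat \<Rightarrow> 'a \<Rightarrow> 'b::{metric_space, second_countable_topology}"
    and Y :: "nat \<Rightarrow> 'a \<Rightarrow> 'c::{metric_space, second_countable_topology}"
  assumes X: "exp_concentrated M X a" and Y: "exp_concentrated M Y b"
  shows "exp_concentrated M (\<lambda>n \<omega>. (X n \<omega>, Y n \<omega>)) (a, b)"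
  unfolding exp_concentrated_def
proof (intro conjI allI impI)
  note [measurable] = exp_concentrated_measurable[OF X] exp_concentrated_measurable[OF Y]
  show "(\<lambda>\<omega>. (X n \<omega>, Y n \<omega>)) \<in> borel_measurable (M n)" for n
    by measurable
  fix \<epsilon> :: real assume "0 < \<epsilon>"
  then have "0 < \<epsilon> / 2" by simp
  obtain C1 \<kappa>1 where "0 < \<kappa>1" and bound1:
    "\<forall>\<^sub>F n in sequentially. measure (M n) {\<omega> \<in> space (M n). \<epsilon> / 2 \<le> dist (X n \<omega>) a} \<le> C1 * exp (- \<kappa>1 * real n)"
    using exp_concentratedD[OF X \<open>0 < \<epsilon> / 2\<close>] .
  obtain C2 \<kappa>2 where "0 < \<kappa>2" and bound2:
    "\<forall>\<^sub>F n in sequentially. measure (M n) {\<omega> \<in> space (M n). \<epsilon> / 2 \<le> dist (Y n \<omega>) b} \<le> C2 * exp (- \<kappa>2 * real n)"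
    using exp_concentratedD[OF Y \<open>0 < \<epsilon> / 2\<close>] .
  define \<kappa> where "\<kappa> = min \<kappa>1 \<kappa>2"
  have exp_le: "C * exp (- \<kappa>' * real n) \<le> \<bar>C\<bar> * exp (- \<kappa> * real n)" if "\<kappa> \<le> \<kappa>'" for C \<kappa>' and n :: nat
  proof -
    have "exp (- \<kappa>' * real n) \<le> exp (- \<kappa> * real n)"
      using mult_right_mono[OF that, of "real n"] by simp
    then show ?thesis by (intro mult_mono) auto
  qed
  have "\<forall>\<^sub>F n in sequentially. measure (M n) {\<omega> \<in> space (M n). \<epsilon> \<le> dist (X n \<omega>, Y n \<omega>) (a, b)}
      \<le> (\<bar>C1\<bar> + \<bar>C2\<bar>) * exp (- \<kappa> * real n)"
    using bound1 bound2
  proof eventually_elim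
    case (elim n)
    let ?A = "{\<omega> \<in> space (M n). \<epsilon> / 2 \<le> dist (X n \<omega>) a}"
    let ?B = "{\<omega> \<in> space (M n). \<epsilon> / 2 \<le> dist (Y n \<omega>) b}"
    interpret prob_space "M n" by (rule prob_space_M)
    have "{\<omega> \<in> space (M n). \<epsilon> \<le> dist (X n \<omega>, Y n \<omega>) (a, b)} \<subseteq> ?A \<union> ?B"
    proof
      fix \<omega> assume "\<omega> \<in> {\<omega> \<in> space (M n). \<epsilon> \<le> dist (X n \<omega>, Y n \<omega>) (a, b)}"
      moreover have "dist (X n \<omega>, Y n \<omega>) (a, b) \<le> dist (X n \<omega>) a + dist (Y n \<omega>) b"
        using sqrt_sum_squares_le_sum_abs[of "dist (X n \<omega>) a" "dist (Y n \<omega>) b"]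
        by (simp add: dist_Pair_Pair)
      ultimately show "\<omega> \<in> ?A \<union> ?B"
        by (cases "\<epsilon> / 2 \<le> dist (X n \<omega>) a") auto
    qed
    moreover have events: "?A \<in> events" "?B \<in> events"
      by measurable
    ultimately have "prob {\<omega> \<in> space (M n). \<epsilon> \<le> dist (X n \<omega>, Y n \<omega>) (a, b)} \<le> prob (?A \<union> ?B)"
      by (intro finite_measure_mono) auto
    also have "\<dots> \<le> prob ?A + prob ?B"
      using events by (rule measure_Un_le)
    also have "\<dots> \<le> \<bar>C1\<bar> * exp (- \<kappa> * real n) + \<bar>C2\<bar> * exp (- \<kappa> * real n)"
      using elim exp_le[of \<kappa>1 C1 n] exp_le[of \<kappa>2 C2 n] unfolding \<kappa>_def by linarith
    finally show ?case
      by (simp add: distrib_right)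
  qed
  then show "\<exists>C \<kappa>. 0 < \<kappa> \<and> (\<forall>\<^sub>F n in sequentially.
      measure (M n) {\<omega> \<in> space (M n). \<epsilon> \<le> dist (X n \<omega>, Y n \<omega>) (a, b)} \<le> C * exp (- \<kappa> * real n))"
    using \<open>0 < \<kappa>1\<close> \<open>0 < \<kappa>2\<close> unfolding \<kappa>_def by (intro exI[of _ "\<bar>C1\<bar> + \<bar>C2\<bar>"] exI[of _ "min \<kappa>1 \<kappa>2"]) simp
qed

lemma exp_concentrated_compose:
  fixes f :: "'b::{metric_space, second_countable_topology} \<Rightarrow> 'c::{metric_space, second_countable_topology}"
  assumes X: "exp_concentrated M X c" and f: "isCont f c" "f \<in> borel_measurable borel"
  shows "exp_concentrated M (\<lambda>n \<omega>. f (X n \<omega>)) (f c)"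
  unfolding exp_concentrated_def
proof (intro conjI allI impI)
  note [measurable] = exp_concentrated_measurable[OF X] f(2)
  show "(\<lambda>\<omega>. f (X n \<omega>)) \<in> borel_measurable (M n)" for n
    by measurable
  fix \<epsilon> :: real assume "0 < \<epsilon>"
  then obtain \<delta> where "0 < \<delta>" and \<delta>: "\<And>x. dist x c < \<delta> \<Longrightarrow> dist (f x) (f c) < \<epsilon>"
    using f(1) unfolding continuous_at_eps_delta by blast
  obtain C \<kappa> where "0 < \<kappa>" and bound:
    "\<forall>\<^sub>F n in sequentially. measure (M n) {\<omega> \<in> space (M n). \<delta> \<le> dist (X n \<omega>) c} \<le> C * exp (- \<kappa> * real n)"
    using exp_concentratedD[OF X \<open>0 < \<delta>\<close>] .
  have "\<forall>\<^sub>F n in sequentially. measure (M n) {\<omega> \<in> space (M n). \<epsilon> \<le> dist (f (X n \<omega>)) (f c)} \<le> C * exp (- \<kappa> * real n)"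
    using bound
  proof eventually_elim
    case (elim n)
    interpret prob_space "M n" by (rule prob_space_M)
    have "prob {\<omega> \<in> space (M n). \<epsilon> \<le> dist (f (X n \<omega>)) (f c)} \<le> prob {\<omega> \<in> space (M n). \<delta> \<le> dist (X n \<omega>) c}"
    proof (rule finite_measure_mono)
      show "{\<omega> \<in> space (M n). \<epsilon> \<le> dist (f (X n \<omega>)) (f c)} \<subseteq> {\<omega> \<in> space (M n). \<delta> \<le> dist (X n \<omega>) c}"
        using \<delta> by (auto simp: not_less[symmetric])
      show "{\<omega> \<in> space (M n). \<delta> \<le> dist (X n \<omega>) c} \<in> events"
        by measurable
    qed
    with elim show ?case by simp
  qed
  with \<open>0 < \<kappa>\<close> show "\<exists>C \<kappa>. 0 < \<kappa> \<and> (\<forall>\<^sub>F n in sequentially.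
      measure (M n) {\<omega> \<in> space (M n). \<epsilon> \<le> dist (f (X n \<omega>)) (f c)} \<le> C * exp (- \<kappa> * real n))"
    by blast
qed

lemma exp_concentrated_add:
  fixes X Y :: "nat \<Rightarrow> 'a \<Rightarrow> 'b::{real_normed_vector, second_countable_topology}"
  assumes "exp_concentrated M X a" "exp_concentrated M Y b"
  shows "exp_concentrated M (\<lambda>n \<omega>. X n \<omega> + Y n \<omega>) (a + b)"
proof -
  have "isCont (\<lambda>p. fst p + snd p) (a, b)"
    by (intro continuous_intros)
  moreover have "(\<lambda>p. fst p + snd p :: 'b) \<in> borel_measurable borel"
    unfolding borel_prod[symmetric] by measurable
  ultimately show ?thesis
    using exp_concentrated_compose[OF exp_concentrated_Pair[OF assms], of "\<lambda>p. fst p + snd p"] by simp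
qed

end

lemma exp_concentrated_count_fraction:
  fixes \<mu> :: "nat \<Rightarrow> 'a measure" and B :: "nat \<Rightarrow> 'a set" and P :: "nat \<Rightarrow> nat \<Rightarrow> bool"
  assumes \<mu>: "\<And>n. prob_space (\<mu> n)" and B: "\<And>n. B n \<in> sets (\<mu> n)"
    and mean: "(\<lambda>n. real (card {i. i < n \<and> P n i}) / n * measure (\<mu> n) (B n)) \<longlonglongrightarrow> \<alpha>"
  shows "exp_concentrated (\<lambda>n. PiM {..<n} (\<lambda>_. \<mu> n))
           (\<lambda>n \<omega>. real (card {i. i < n \<and> P n i \<and> \<omega> i \<in> B n}) / n) \<alpha>"
proof -
  define S where "S = (\<lambda>n \<omega>. real (card {i. i < n \<and> P n i \<and> \<omega> i \<in> B n}))"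
  define m where "m n = real (card {i. i < n \<and> P n i}) * measure (\<mu> n) (B n)" for n
  have PiM_prob: "prob_space (PiM {..<n} (\<lambda>_. \<mu> n))" for n
    by (intro prob_space_PiM \<mu>)
  have S_measurable [measurable]: "S n \<in> borel_measurable (PiM {..<n} (\<lambda>_. \<mu> n))" for n
    unfolding S_def by (rule PiM_count_hoeffding(1)[OF \<mu> B])
  have "exp_concentrated (\<lambda>n. PiM {..<n} (\<lambda>_. \<mu> n)) (\<lambda>n \<omega>. S n \<omega> / n - m n / n) 0"
    unfolding exp_concentrated_def
  proof (intro conjI allI impI)
    show "(\<lambda>\<omega>. S n \<omega> / n - m n / n) \<in> borel_measurable (PiM {..<n} (\<lambda>_. \<mu> n))" for n
      by measurable
    fix \<epsilon> :: real assume "0 < \<epsilon>"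
    have "\<forall>\<^sub>F n in sequentially. measure (PiM {..<n} (\<lambda>_. \<mu> n))
        {\<omega> \<in> space (PiM {..<n} (\<lambda>_. \<mu> n)). \<epsilon> \<le> dist (S n \<omega> / n - m n / n) 0} \<le> 2 * exp (- (2 * \<epsilon>\<^sup>2) * real n)"
      using eventually_gt_at_top[of 0]
    proof eventually_elim
      case (elim n)
      have "dist (x / n - m n / n) 0 = \<bar>x - m n\<bar> / n" for x
        by (simp add: dist_real_def abs_divide flip: diff_divide_distrib)
      then have "\<epsilon> \<le> dist (x / n - m n / n) 0 \<longleftrightarrow> real n * \<epsilon> \<le> \<bar>x - m n\<bar>" for x
        using elim by (simp add: le_divide_eq mult.commute)
      moreover have "2 * (real n * \<epsilon>)\<^sup>2 / n = 2 * \<epsilon>\<^sup>2 * n"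
        using elim by (simp add: power2_eq_square)
      ultimately show ?case
        using PiM_count_hoeffding(3)[OF \<mu> B elim, where e="real n * \<epsilon>" and P="P n"] \<open>0 < \<epsilon>\<close>
        by (simp add: S_def m_def)
    qed
    moreover have "0 < 2 * \<epsilon>\<^sup>2"
      using \<open>0 < \<epsilon>\<close> by simp
    ultimately show "\<exists>C \<kappa>. 0 < \<kappa> \<and> (\<forall>\<^sub>F n in sequentially. measure (PiM {..<n} (\<lambda>_. \<mu> n))
        {\<omega> \<in> space (PiM {..<n} (\<lambda>_. \<mu> n)). \<epsilon> \<le> dist (S n \<omega> / n - m n / n) 0} \<le> C * exp (- \<kappa> * real n))"
      by blast
  qed
  moreover have "exp_concentrated (\<lambda>n. PiM {..<n} (\<lambda>_. \<mu> n)) (\<lambda>n _. m n / n) \<alpha>"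
    using mean by (intro exp_concentrated_deterministic) (simp add: m_def)
  ultimately have "exp_concentrated (\<lambda>n. PiM {..<n} (\<lambda>_. \<mu> n)) (\<lambda>n \<omega>. (S n \<omega> / n - m n / n) + m n / n) (0 + \<alpha>)"
    by (rule exp_concentrated_add[OF PiM_prob])
  then show ?thesis
    by (simp add: S_def)
qed

locale linear_growth =
  fixes M :: "nat \<Rightarrow> 'a measure" and V :: "nat \<Rightarrow> 'a \<Rightarrow> real" and c :: real
  assumes prob_space_M: "\<And>n. prob_space (M n)"
    and V_measurable [measurable]: "\<And>n. V n \<in> borel_measurable (M n)"
    and V_range: "\<And>n \<omega>. \<omega> \<in> space (M n) \<Longrightarrow> 0 \<le> V n \<omega> \<and> V n \<omega> \<le> n"
    and concentrated: "exp_concentrated M (\<lambda>n \<omega>. V n \<omega> / n) c"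
    and c_pos: "0 < c"
begin

lemma V_div_range:
  assumes "\<omega> \<in> space (M n)"
  shows "0 \<le> V n \<omega> / n" "V n \<omega> / n \<le> 1"
  using V_range[OF assms] by (auto simp: divide_le_eq_1)

lemma V_integrable [simp]: "integrable (M n) (V n)"
proof -
  interpret prob_space "M n" by (rule prob_space_M)
  show ?thesis
    using V_range by (intro integrable_const_bound[where B="real n"]) auto
qed

lemma tendsto_measure_deviation:
  "0 < \<epsilon> \<Longrightarrow> (\<lambda>n. measure (M n) {\<omega> \<in> space (M n). \<epsilon> \<le> \<bar>V n \<omega> / n - c\<bar>}) \<longlonglongrightarrow> 0"
  using exp_concentrated_tendsto_measure[OF prob_space_M concentrated] by (simp add: dist_real_def)

lemma expectation_div_tendsto: "(\<lambda>n. (\<integral>\<omega>. V n \<omega> \<partial>M n) / n) \<longlonglongrightarrow> c"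
proof (rule tendstoI)
  fix \<epsilon> :: real assume "0 < \<epsilon>"
  define A where "A n = {\<omega> \<in> space (M n). \<epsilon> / 2 \<le> \<bar>V n \<omega> / n - c\<bar>}" for n
  have "(\<lambda>n. (1 + c) * measure (M n) (A n)) \<longlonglongrightarrow> (1 + c) * 0"
    unfolding A_def using \<open>0 < \<epsilon>\<close> by (intro tendsto_mult tendsto_const tendsto_measure_deviation) simp
  then have "\<forall>\<^sub>F n in sequentially. (1 + c) * measure (M n) (A n) < \<epsilon> / 2"
    by (rule order_tendstoD(2)) (use \<open>0 < \<epsilon>\<close> in simp)
  then show "\<forall>\<^sub>F n in sequentially. dist ((\<integral>\<omega>. V n \<omega> \<partial>M n) / n) c < \<epsilon>"
  proof eventually_elim
    case (elim n)
    interpret prob_space "M n" by (rule prob_space_M)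
    have A_sets [measurable]: "A n \<in> events"
      unfolding A_def by measurable
    have pointwise: "\<bar>V n \<omega> / n - c\<bar> \<le> \<epsilon> / 2 + (1 + c) * indicator (A n) \<omega>" if "\<omega> \<in> space (M n)" for \<omega>
    proof (cases "\<omega> \<in> A n")
      case True
      then show ?thesis
        using V_div_range[OF that] c_pos \<open>0 < \<epsilon>\<close> by simp
    qed (use that in \<open>simp add: A_def\<close>)
    have "\<bar>\<integral>\<omega>. V n \<omega> / n - c \<partial>M n\<bar> \<le> (\<integral>\<omega>. \<bar>V n \<omega> / n - c\<bar> \<partial>M n)"
      using integral_norm_bound[of "M n" "\<lambda>\<omega>. V n \<omega> / n - c"] by simp
    also have "\<dots> \<le> (\<integral>\<omega>. \<epsilon> / 2 + (1 + c) * indicator (A n) \<omega> \<partial>M n)"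
      using pointwise A_sets by (intro integral_mono) (auto simp: emeasure_finite less_top[symmetric])
    also have "\<dots> = \<epsilon> / 2 + (1 + c) * measure (M n) (A n)"
      using A_sets by (subst Bochner_Integration.integral_add) (auto simp: prob_space emeasure_finite less_top[symmetric])
    finally show ?case
      using elim by (simp add: dist_real_def prob_space)
  qed
qed

lemma tendsto_measure_deviation_from_mean:
  assumes "0 < \<epsilon>"
  shows "(\<lambda>n. measure (M n) {\<omega> \<in> space (M n). \<epsilon> < \<bar>V n \<omega> / n - (\<integral>v. V n v \<partial>M n) / n\<bar>}) \<longlonglongrightarrow> 0"
proof (rule tendsto_sandwich[OF _ _ tendsto_const tendsto_measure_deviation])
  have "\<forall>\<^sub>F n in sequentially. dist ((\<integral>v. V n v \<partial>M n) / n) c < \<epsilon> / 2"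
    using assms by (intro tendstoD expectation_div_tendsto) simp
  then show "\<forall>\<^sub>F n in sequentially.
      measure (M n) {\<omega> \<in> space (M n). \<epsilon> < \<bar>V n \<omega> / n - (\<integral>v. V n v \<partial>M n) / n\<bar>}
      \<le> measure (M n) {\<omega> \<in> space (M n). \<epsilon> / 2 \<le> \<bar>V n \<omega> / n - c\<bar>}"
  proof eventually_elim
    case (elim n)
    interpret prob_space "M n" by (rule prob_space_M)
    show ?case
    proof (rule finite_measure_mono)
      show "{\<omega> \<in> space (M n). \<epsilon> < \<bar>V n \<omega> / n - (\<integral>v. V n v \<partial>M n) / n\<bar>}
          \<subseteq> {\<omega> \<in> space (M n). \<epsilon> / 2 \<le> \<bar>V n \<omega> / n - c\<bar>}"
      proof -
        have "\<epsilon> / 2 \<le> \<bar>x - c\<bar>" if "\<epsilon> < \<bar>x - (\<integral>v. V n v \<partial>M n) / n\<bar>" for x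
          using that elim unfolding dist_real_def by linarith
        then show ?thesis by auto
      qed
    qed measurable
  qed
qed (use assms in simp_all)

lemma tendsto_measure_eq_0: "(\<lambda>n. measure (M n) {\<omega> \<in> space (M n). V n \<omega> = 0}) \<longlonglongrightarrow> 0"
proof (rule tendsto_sandwich[OF _ _ tendsto_const tendsto_measure_deviation])
  show "\<forall>\<^sub>F n in sequentially. measure (M n) {\<omega> \<in> space (M n). V n \<omega> = 0}
      \<le> measure (M n) {\<omega> \<in> space (M n). c \<le> \<bar>V n \<omega> / n - c\<bar>}"
  proof (intro always_eventually allI)
    fix n
    interpret prob_space "M n" by (rule prob_space_M)
    show "prob {\<omega> \<in> space (M n). V n \<omega> = 0} \<le> prob {\<omega> \<in> space (M n). c \<le> \<bar>V n \<omega> / n - c\<bar>}"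
      using c_pos by (intro finite_measure_mono) auto
  qed
qed (use c_pos in simp_all)

lemma inverse_sqrt_expectation_tendsto_0:
  assumes V_pos: "\<And>n \<omega>. \<omega> \<in> space (M n) \<Longrightarrow> 0 < V n \<omega> \<Longrightarrow> 1 / (2 * real n) \<le> V n \<omega>"
  shows "(\<lambda>n. \<integral>\<omega>. (if 0 < V n \<omega> then 1 / sqrt (V n \<omega>) else 0) \<partial>M n) \<longlonglongrightarrow> 0"
proof -
  obtain C \<kappa> where "0 < \<kappa>" and bound: "\<forall>\<^sub>F n in sequentially.
      measure (M n) {\<omega> \<in> space (M n). c / 2 \<le> dist (V n \<omega> / n) c} \<le> C * exp (- \<kappa> * real n)"
    using exp_concentratedD[OF concentrated half_gt_zero[OF c_pos]] .
  define g where "g = (\<lambda>n \<omega>. if 0 < V n \<omega> then 1 / sqrt (V n \<omega>) else 0)"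
  define A where "A n = {\<omega> \<in> space (M n). c / 2 \<le> \<bar>V n \<omega> / n - c\<bar>}" for n
  \<comment> \<open>Off A n we have V n \<omega> > c n / 2; on A n only V n \<omega> \<ge> 1 / (2 n) is available,
    but A n has exponentially small probability.\<close>
  have "\<forall>\<^sub>F n in sequentially. (\<integral>\<omega>. g n \<omega> \<partial>M n) \<le> sqrt (2 / (c * n)) + sqrt (2 * n) * (C * exp (- \<kappa> * real n))"
    using bound eventually_gt_at_top[of 0]
  proof eventually_elim
    case (elim n)
    interpret prob_space "M n" by (rule prob_space_M)
    have A_sets [measurable]: "A n \<in> events"
      unfolding A_def by measurable
    have g_measurable [measurable]: "g n \<in> borel_measurable (M n)"
      unfolding g_def by measurable
    have g_le: "g n \<omega> \<le> sqrt (2 * n)" if "\<omega> \<in> space (M n)" for \<omega>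
    proof (cases "0 < V n \<omega>")
      case True
      then have "sqrt (1 / (2 * real n)) \<le> sqrt (V n \<omega>)"
        using V_pos[OF that] by simp
      then show ?thesis
        using True elim by (simp add: g_def real_sqrt_divide divide_le_eq mult.commute)
    qed (simp add: g_def)
    have sqrt_nonneg: "0 \<le> sqrt (2 / (c * n))"
      using c_pos by simp
    have "g n \<omega> \<le> sqrt (2 / (c * n)) + sqrt (2 * n) * indicator (A n) \<omega>" if "\<omega> \<in> space (M n)" for \<omega>
    proof (cases "\<omega> \<in> A n")
      case True
      have "g n \<omega> \<le> sqrt (2 / (c * n)) + sqrt (2 * n)"
        using g_le[OF that] sqrt_nonneg by linarith
      then show ?thesis
        using True by simp
    next
      case False
      have "g n \<omega> \<le> sqrt (2 / (c * n))"
      proof (cases "0 < V n \<omega>")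
        case True
        have "\<bar>V n \<omega> / n - c\<bar> < c / 2"
          using False that by (simp add: A_def not_le)
        then have "c / 2 < V n \<omega> / n"
          by linarith
        then have "c * n / 2 < V n \<omega>"
          using elim by (simp add: field_simps)
        then have "sqrt (c * n / 2) < sqrt (V n \<omega>)"
          by simp
        then show ?thesis
          using c_pos elim True by (simp add: g_def real_sqrt_divide divide_le_eq field_simps)
      qed (use sqrt_nonneg in \<open>simp add: g_def\<close>)
      then show ?thesis
        using False by simp
    qed
    moreover have "integrable (M n) (g n)"
      using g_le by (intro integrable_const_bound[where B="sqrt (2 * n)"]) (auto simp: g_def)
    ultimately have "(\<integral>\<omega>. g n \<omega> \<partial>M n) \<le> (\<integral>\<omega>. sqrt (2 / (c * n)) + sqrt (2 * n) * indicator (A n) \<omega> \<partial>M n)"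
      using A_sets by (intro integral_mono) (auto simp: emeasure_finite less_top[symmetric])
    also have "\<dots> = sqrt (2 / (c * n)) + sqrt (2 * n) * measure (M n) (A n)"
      using A_sets by (subst Bochner_Integration.integral_add) (auto simp: prob_space emeasure_finite less_top[symmetric])
    also have "\<dots> \<le> sqrt (2 / (c * n)) + sqrt (2 * n) * (C * exp (- \<kappa> * real n))"
      using elim by (intro add_left_mono mult_left_mono) (auto simp: A_def dist_real_def)
    finally show ?case .
  qed
  moreover have "(\<lambda>n. sqrt (2 / (c * n)) + sqrt (2 * n) * (C * exp (- \<kappa> * real n))) \<longlonglongrightarrow> 0"
  proof -
    have "(\<lambda>n. sqrt (2 / (c * n))) \<longlonglongrightarrow> 0" "(\<lambda>n. sqrt (2 * n) * exp (- \<kappa> * real n)) \<longlonglongrightarrow> 0"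
      using c_pos \<open>0 < \<kappa>\<close> by real_asymp+
    from tendsto_add[OF this(1) tendsto_mult_left_zero[OF this(2), of C]] show ?thesis
      by (simp add: ac_simps)
  qed
  moreover have "\<forall>\<^sub>F n in sequentially. 0 \<le> (\<integral>\<omega>. g n \<omega> \<partial>M n)"
    by (simp add: g_def)
  ultimately show ?thesis
    unfolding g_def by (rule tendsto_sandwich[OF _ _ tendsto_const, rotated])
qed

end

lemma tendsto_measure_gt_of_expectation_tendsto_0:
  fixes X :: "nat \<Rightarrow> 'a \<Rightarrow> real"
  assumes "\<And>n. prob_space (M n)" "\<And>n. integrable (M n) (X n)"
    and "\<And>n \<omega>. \<omega> \<in> space (M n) \<Longrightarrow> 0 \<le> X n \<omega>"
    and "(\<lambda>n. \<integral>\<omega>. X n \<omega> \<partial>M n) \<longlonglongrightarrow> 0" and "0 < \<epsilon>"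
  shows "(\<lambda>n. measure (M n) {\<omega> \<in> space (M n). \<epsilon> < \<bar>X n \<omega>\<bar>}) \<longlonglongrightarrow> 0"
proof (rule tendsto_sandwich[OF _ _ tendsto_const])
  show "(\<lambda>n. (\<integral>\<omega>. X n \<omega> \<partial>M n) / \<epsilon>) \<longlonglongrightarrow> 0"
    using assms(4) by (rule tendsto_divide_zero)
  show "\<forall>\<^sub>F n in sequentially. measure (M n) {\<omega> \<in> space (M n). \<epsilon> < \<bar>X n \<omega>\<bar>} \<le> (\<integral>\<omega>. X n \<omega> \<partial>M n) / \<epsilon>"
  proof (intro always_eventually allI)
    fix n
    interpret prob_space "M n" by (rule assms(1))
    have [measurable]: "X n \<in> borel_measurable (M n)"
      using assms(2) by (rule borel_measurable_integrable)
    have "prob {\<omega> \<in> space (M n). \<epsilon> < \<bar>X n \<omega>\<bar>} \<le> prob {\<omega> \<in> space (M n). \<epsilon> \<le> X n \<omega>}"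
      using assms(3) by (intro finite_measure_mono) auto
    also have "\<dots> \<le> (\<integral>\<omega>. X n \<omega> \<partial>M n) / \<epsilon>"
      using assms by (intro integral_Markov_inequality_measure[where A="space (M n)"]) auto
    finally show "prob {\<omega> \<in> space (M n). \<epsilon> < \<bar>X n \<omega>\<bar>} \<le> (\<integral>\<omega>. X n \<omega> \<partial>M n) / \<epsilon>" .
  qed
qed simp

section \<open>The hypergeometric variance\<close>

text \<open>V_k is the hypergeometric variance with \<eta> = 1; the extra argument \<eta> makes the expression
  homogeneous of degree one, so that V_k / n is the same expression in the fractions N_1/n, N_0/n, D_k/n
  and \<eta> = 1/n.\<close>
definition hypergeom_variance :: "real \<Rightarrow> real \<Rightarrow> real \<Rightarrow> real \<Rightarrow> real" where
  "hypergeom_variance a b d \<eta> = d * (a + b - d) * a * b / ((a + b)\<^sup>2 * (a + b - \<eta>))"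

lemma Vk_eq_hypergeom_variance:
  "Vk n T1 T0 k \<omega> = hypergeom_variance (N1 n T1 T0 k \<omega>) (N0 n T1 T0 k \<omega>) (Dk n T1 T0 k \<omega>) 1"
  by (simp add: Vk_def hypergeom_variance_def Let_def)

lemma hypergeom_variance_divide:
  "hypergeom_variance (a / c) (b / c) (d / c) (\<eta> / c) = hypergeom_variance a b d \<eta> / c"
proof (cases "c = 0")
  case False
  have "d / c * (a / c + b / c - d / c) * (a / c) * (b / c) = d * (a + b - d) * a * b / c ^ 4"
    and "(a / c + b / c)\<^sup>2 * (a / c + b / c - \<eta> / c) = (a + b)\<^sup>2 * (a + b - \<eta>) / c ^ 3"
    using False by (simp_all add: field_simps power2_eq_square power3_eq_cube power4_eq_xxxx)
  then show ?thesis
    unfolding hypergeom_variance_def using False by (simp add: divide_simps power_eq_if)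
qed (simp add: hypergeom_variance_def)

lemma hypergeom_variance_bounds:
  fixes a b d :: nat
  assumes "d \<le> a + b"
  defines "V \<equiv> hypergeom_variance a b d 1"
  shows "0 \<le> V" and "V \<le> d" and "V \<le> real (a + b) - d" and "V \<le> a" and "V \<le> b"
    and "0 < V \<Longrightarrow> 1 / (2 * real (a + b)) \<le> V"
proof -
  consider "d = 0 \<or> d = a + b \<or> a = 0 \<or> b = 0" | "1 \<le> d" "d < a + b" "1 \<le> a" "1 \<le> b"
    using assms by linarith
  then have "0 \<le> V \<and> V \<le> d \<and> V \<le> real (a + b) - d \<and> V \<le> a \<and> V \<le> b \<and> (0 < V \<longrightarrow> 1 / (2 * real (a + b)) \<le> V)"
  proof cases
    case 1
    then have "V = 0" by (auto simp: V_def hypergeom_variance_def)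
    then show ?thesis using assms by auto
  next
    case 2
    define N where "N = real a + real b"
    define A where "A = real d * (N - d) / (N - 1)"
    define B where "B = real a * real b / N\<^sup>2"
    have N: "2 \<le> N" "real d + 1 \<le> N" using 2 by (auto simp: N_def)
    have V_eq: "V = A * B"
      by (simp add: V_def hypergeom_variance_def A_def B_def N_def ac_simps)
    have "real d * (N - d) \<le> real d * (N - 1)" "real d * (N - d) \<le> (N - 1) * (N - d)"
      using 2 N by (intro mult_left_mono mult_right_mono; simp)+
    then have A_le: "A \<le> d" "A \<le> N - d"
      using N by (simp_all add: A_def pos_divide_le_eq)
    have A_ge: "1 \<le> A"
    proof -
      have "0 \<le> (real d - 1) * (N - d - 1)" using 2 N by simp
      then show ?thesis using N by (simp add: A_def field_simps algebra_simps)
    qed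
    have B_nonneg: "0 \<le> B" by (simp add: B_def)
    have B_eq: "B = (a / N) * (b / N)"
      by (simp add: B_def power2_eq_square)
    have ab_le: "a / N \<le> 1" "b / N \<le> 1" "0 \<le> a / N" "0 \<le> b / N"
      using N by (simp_all add: N_def)
    have B_le: "B \<le> a / N" "B \<le> b / N" "B \<le> 1"
      unfolding B_eq
      by (rule mult_left_le mult_left_le_one_le mult_le_one; use ab_le in simp)+
    have B_ge: "(N - 1) / N\<^sup>2 \<le> B"
    proof -
      have "0 \<le> (real a - 1) * (real b - 1)" using 2 by simp
      then show ?thesis by (simp add: B_def N_def divide_right_mono algebra_simps)
    qed
    have "V \<le> A"
      unfolding V_eq using A_ge B_le B_nonneg by (simp add: mult_left_le)
    moreover have "V \<le> N * (a / N)" "V \<le> N * (b / N)"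
      unfolding V_eq using A_ge B_le B_nonneg A_le N by (intro mult_mono; linarith)+
    ultimately have V_le: "V \<le> A" "V \<le> a" "V \<le> b"
      using N by simp_all
    have V_ge: "B \<le> V"
      unfolding V_eq using A_ge B_nonneg mult_right_mono[of 1 A B] by simp
    have "1 / (2 * N) \<le> (N - 1) / N\<^sup>2"
      using N by (simp add: field_simps power2_eq_square)
    then show ?thesis
      using V_le V_ge A_le B_ge B_nonneg N by (auto simp: N_def)
  qed
  then show "0 \<le> V" "V \<le> d" "V \<le> real (a + b) - d" "V \<le> a" "V \<le> b"
    "0 < V \<Longrightarrow> 1 / (2 * real (a + b)) \<le> V" by auto
qed

lemma hypergeom_variance_pos:
  assumes "0 < a" "0 < b" "0 < d" "d < a + b"
  shows "0 < hypergeom_variance a b d 0"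
  using assms by (simp add: hypergeom_variance_def)

lemma isCont_hypergeom_variance:
  assumes "a + b \<noteq> 0" "a + b \<noteq> \<eta>"
  shows "isCont (\<lambda>(u, v, w, h). hypergeom_variance u v w h) (a, b, d, \<eta>)"
  using assms unfolding hypergeom_variance_def case_prod_unfold
  by (intro continuous_intros) auto

lemma borel_measurable_hypergeom_variance:
  "(\<lambda>(u, v, w, h). hypergeom_variance u v w h) \<in> borel_measurable borel"
  unfolding borel_prod[symmetric] hypergeom_variance_def case_prod_unfold by measurable

section \<open>Counts in a population under the null hypothesis\<close>

definition treated_uncensored_at :: "real \<Rightarrow> (bool \<times> ereal \<times> ereal) set" where
  "treated_uncensored_at t = {x. fst x \<and> ereal t \<le> fst (snd x)}"

definition control_uncensored_at :: "real \<Rightarrow> (bool \<times> ereal \<times> ereal) set" where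
  "control_uncensored_at t = {x. \<not> fst x \<and> ereal t \<le> snd (snd x)}"

definition uncensored_at :: "real \<Rightarrow> (bool \<times> ereal \<times> ereal) set" where
  "uncensored_at t = {x. ereal t \<le> (if fst x then fst (snd x) else snd (snd x))}"

lemma uncensored_at_eq_Un: "uncensored_at t = treated_uncensored_at t \<union> control_uncensored_at t"
  by (auto simp: uncensored_at_def treated_uncensored_at_def control_uncensored_at_def)

lemma
  fixes Q :: "(ereal \<times> ereal) measure"
  assumes Q: "prob_space Q" and Q_sets: "sets Q = sets borel" and p: "0 \<le> p" "p \<le> 1"
  defines "\<mu> \<equiv> measure_pmf (bernoulli_pmf p) \<Otimes>\<^sub>M Q"
  shows treated_uncensored_at_sets: "treated_uncensored_at t \<in> sets \<mu>"
    and control_uncensored_at_sets: "control_uncensored_at t \<in> sets \<mu>"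
    and uncensored_at_sets: "uncensored_at t \<in> sets \<mu>"
    and measure_treated_uncensored_at: "measure \<mu> (treated_uncensored_at t) = p * Gsurv Q True t"
    and measure_control_uncensored_at: "measure \<mu> (control_uncensored_at t) = (1 - p) * Gsurv Q False t"
    and measure_uncensored_at:
      "measure \<mu> (uncensored_at t) = p * Gsurv Q True t + (1 - p) * Gsurv Q False t"
proof -
  interpret Q: prob_space Q by (rule Q)
  interpret \<mu>: prob_space \<mu> unfolding \<mu>_def by (intro prob_space_pair measure_pmf.prob_space_axioms Q)
  have space_Q: "space Q = UNIV" using sets_eq_imp_space_eq[OF Q_sets] by simp
  define C1 where "C1 = {c :: ereal \<times> ereal. ereal t \<le> fst c}"
  define C0 where "C0 = {c :: ereal \<times> ereal. ereal t \<le> snd c}"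
  have C1_sets: "C1 \<in> sets Q" and C0_sets: "C0 \<in> sets Q"
    unfolding C1_def C0_def Q_sets by (intro borel_closed closed_Collect_le continuous_intros)+
  have treated_eq: "treated_uncensored_at t = {True} \<times> C1"
    and control_eq: "control_uncensored_at t = {False} \<times> C0"
    by (auto simp: treated_uncensored_at_def control_uncensored_at_def C1_def C0_def)
  show treated: "treated_uncensored_at t \<in> sets \<mu>" and control: "control_uncensored_at t \<in> sets \<mu>"
    unfolding treated_eq control_eq \<mu>_def using C1_sets C0_sets by (auto intro: pair_measureI)
  then show "uncensored_at t \<in> sets \<mu>"
    unfolding uncensored_at_eq_Un by auto
  show m1: "measure \<mu> (treated_uncensored_at t) = p * Gsurv Q True t"
    unfolding treated_eq \<mu>_def measure_def Gsurv_def space_Q using C1_sets p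
    by (subst Q.emeasure_pair_measure_Times) (auto simp: emeasure_pmf_single enn2real_mult C1_def)
  show m0: "measure \<mu> (control_uncensored_at t) = (1 - p) * Gsurv Q False t"
    unfolding control_eq \<mu>_def measure_def Gsurv_def space_Q using C0_sets p
    by (subst Q.emeasure_pair_measure_Times) (auto simp: emeasure_pmf_single enn2real_mult C0_def)
  have "treated_uncensored_at t \<inter> control_uncensored_at t = {}"
    by (auto simp: treated_uncensored_at_def control_uncensored_at_def)
  then show "measure \<mu> (uncensored_at t) = p * Gsurv Q True t + (1 - p) * Gsurv Q False t"
    unfolding uncensored_at_eq_Un using treated control m1 m0 by (simp add: \<mu>.finite_measure_Union)
qed

lemma
  fixes T1 T0 :: "nat \<Rightarrow> real" and n k :: nat
  assumes H0: "\<And>i. i < n \<Longrightarrow> T1 i = T0 i"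
  defines "t \<equiv> tval n T0 k"
  shows N1_eq_card: "N1 n T1 T0 k \<omega> = card {i. i < n \<and> t \<le> T0 i \<and> \<omega> i \<in> treated_uncensored_at t}"
    and N0_eq_card: "N0 n T1 T0 k \<omega> = card {i. i < n \<and> t \<le> T0 i \<and> \<omega> i \<in> control_uncensored_at t}"
    and N1_add_N0_eq_card:
      "N1 n T1 T0 k \<omega> + N0 n T1 T0 k \<omega> = card {i. i < n \<and> t \<le> T0 i \<and> \<omega> i \<in> uncensored_at t}"
    and Dk_eq_card: "Dk n T1 T0 k \<omega> = card {i. i < n \<and> T0 i = t \<and> \<omega> i \<in> uncensored_at t}"
proof -
  have W: "Wobs T1 T0 \<omega> i = min (ereal (T0 i)) (Cobs \<omega> i)" if "i < n" for i
    using H0[OF that] by (simp add: Wobs_def Tobs_def)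
  show N1: "N1 n T1 T0 k \<omega> = card {i. i < n \<and> t \<le> T0 i \<and> \<omega> i \<in> treated_uncensored_at t}"
    unfolding N1_def t_def[symmetric]
    by (intro arg_cong[where f=card]) (auto simp: W Zt_def Cobs_def treated_uncensored_at_def)
  show N0: "N0 n T1 T0 k \<omega> = card {i. i < n \<and> t \<le> T0 i \<and> \<omega> i \<in> control_uncensored_at t}"
    unfolding N0_def t_def[symmetric]
    by (intro arg_cong[where f=card]) (auto simp: W Zt_def Cobs_def control_uncensored_at_def)
  show "N1 n T1 T0 k \<omega> + N0 n T1 T0 k \<omega> = card {i. i < n \<and> t \<le> T0 i \<and> \<omega> i \<in> uncensored_at t}"
    unfolding N1 N0 uncensored_at_eq_Un
    by (subst card_Un_disjoint[symmetric])
       (auto simp: treated_uncensored_at_def control_uncensored_at_def intro: arg_cong[where f=card])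
  show "Dk n T1 T0 k \<omega> = card {i. i < n \<and> T0 i = t \<and> \<omega> i \<in> uncensored_at t}"
    unfolding Dk_def t_def[symmetric]
    by (intro arg_cong[where f=card])
       (auto simp: W H0 Dobs_def Tobs_def Cobs_def uncensored_at_def min_def split: if_splits)
qed

lemma card_ge_split:
  fixes T0 :: "nat \<Rightarrow> real"
  shows "card {i. i < n \<and> t \<le> T0 i \<and> U i} = card {i. i < n \<and> T0 i = t \<and> U i} + card {i. i < n \<and> t < T0 i \<and> U i}"
  by (subst card_Un_disjoint[symmetric]) (auto intro: arg_cong[where f=card])

lemma ncnt_eq_sum_dcnt:
  fixes T0 :: "nat \<Rightarrow> real"
  assumes card: "card (T0 ` {..<n}) = K" and k: "1 \<le> k" "k \<le> K"
  shows "ncnt n T0 k = (\<Sum>j=k..K. dcnt n T0 j)"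
proof -
  define xs where "xs = sorted_list_of_set (T0 ` {..<n})"
  have len: "length xs = K" and set_xs: "set xs = T0 ` {..<n}" and "sorted xs" "distinct xs"
    using card by (simp_all add: xs_def)
  have tval: "tval n T0 j = xs ! (j - 1)" for j
    by (simp add: tval_def xs_def)
  have distinct_tval: "tval n T0 j \<noteq> tval n T0 j'" if "j \<in> {k..K}" "j' \<in> {k..K}" "j \<noteq> j'" for j j'
    using that k \<open>distinct xs\<close> len by (auto simp: tval nth_eq_iff_index_eq)
  have "{i. i < n \<and> tval n T0 k \<le> T0 i} = (\<Union>j\<in>{k..K}. {i. i < n \<and> T0 i = tval n T0 j})"
  proof (intro equalityI subsetI)
    fix i assume i: "i \<in> {i. i < n \<and> tval n T0 k \<le> T0 i}"
    then obtain q where q: "q < K" "xs ! q = T0 i"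
      using set_xs len by (metis (mono_tags, lifting) image_eqI in_set_conv_nth lessThan_iff mem_Collect_eq)
    have "k - 1 \<le> q"
    proof (rule ccontr)
      assume "\<not> k - 1 \<le> q"
      then have "xs ! q < xs ! (k - 1)"
        using \<open>sorted xs\<close> \<open>distinct xs\<close> len k by (simp add: sorted_wrt_nth_less strict_sorted_iff)
      then show False using i q tval by auto
    qed
    then show "i \<in> (\<Union>j\<in>{k..K}. {i. i < n \<and> T0 i = tval n T0 j})"
      using i q by (intro UN_I[of "Suc q"]) (auto simp: tval)
  next
    fix i assume "i \<in> (\<Union>j\<in>{k..K}. {i. i < n \<and> T0 i = tval n T0 j})"
    then obtain j where j: "j \<in> {k..K}" "i < n" "T0 i = tval n T0 j" by auto
    have "xs ! (k - 1) \<le> xs ! (j - 1)"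
      using \<open>sorted xs\<close> len j k by (intro sorted_nth_mono) auto
    then show "i \<in> {i. i < n \<and> tval n T0 k \<le> T0 i}"
      using j tval by auto
  qed
  then show ?thesis
    unfolding ncnt_def dcnt_def using distinct_tval
    by (subst card_UN_disjoint[symmetric]) auto
qed

locale null_population =
  fixes p1 :: "nat \<Rightarrow> real" and T1 T0 :: "nat \<Rightarrow> nat \<Rightarrow> real"
    and Q :: "nat \<Rightarrow> (ereal \<times> ereal) measure"
  assumes p1_nonneg: "\<And>n. 0 \<le> p1 n" and p1_le_1: "\<And>n. p1 n \<le> 1"
    and prob_space_Q: "\<And>n. prob_space (Q n)"
    and sets_Q: "\<And>n. sets (Q n) = sets borel"
    and H0: "\<And>n i. i < n \<Longrightarrow> T1 n i = T0 n i"
begin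

abbreviation unit_measure :: "nat \<Rightarrow> (bool \<times> ereal \<times> ereal) measure" where
  "unit_measure n \<equiv> measure_pmf (bernoulli_pmf (p1 n)) \<Otimes>\<^sub>M Q n"

abbreviation M :: "nat \<Rightarrow> outcome measure" where
  "M n \<equiv> popM n (p1 n) (Q n)"

abbreviation V :: "nat \<Rightarrow> nat \<Rightarrow> outcome \<Rightarrow> real" where
  "V k n \<omega> \<equiv> Vk n (T1 n) (T0 n) k \<omega>"

abbreviation event_time :: "nat \<Rightarrow> nat \<Rightarrow> real" where
  "event_time k n \<equiv> tval n (T0 n) k"

abbreviation G1 :: "nat \<Rightarrow> nat \<Rightarrow> real" where
  "G1 k n \<equiv> Gsurv (Q n) True (event_time k n)"

abbreviation G0 :: "nat \<Rightarrow> nat \<Rightarrow> real" where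
  "G0 k n \<equiv> Gsurv (Q n) False (event_time k n)"

lemma M_eq_PiM: "M n = PiM {..<n} (\<lambda>_. unit_measure n)"
  by (simp add: popM_def)

lemma prob_space_unit: "prob_space (unit_measure n)"
  by (intro prob_space_pair measure_pmf.prob_space_axioms prob_space_Q)

lemma prob_space_M: "prob_space (M n)"
  unfolding M_eq_PiM by (intro prob_space_PiM prob_space_unit)

lemma
  shows unit_sets: "treated_uncensored_at t \<in> sets (unit_measure n)" "control_uncensored_at t \<in> sets (unit_measure n)"
      "uncensored_at t \<in> sets (unit_measure n)"
    and measure_unit: "measure (unit_measure n) (treated_uncensored_at t) = p1 n * Gsurv (Q n) True t"
      "measure (unit_measure n) (control_uncensored_at t) = (1 - p1 n) * Gsurv (Q n) False t"
      "measure (unit_measure n) (uncensored_at t) = p1 n * Gsurv (Q n) True t + (1 - p1 n) * Gsurv (Q n) False t"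
proof -
  note unit = prob_space_Q[of n] sets_Q[of n] p1_nonneg[of n] p1_le_1[of n]
  show "treated_uncensored_at t \<in> sets (unit_measure n)" by (rule treated_uncensored_at_sets[OF unit])
  show "control_uncensored_at t \<in> sets (unit_measure n)" by (rule control_uncensored_at_sets[OF unit])
  show "uncensored_at t \<in> sets (unit_measure n)" by (rule uncensored_at_sets[OF unit])
  show "measure (unit_measure n) (treated_uncensored_at t) = p1 n * Gsurv (Q n) True t"
    by (rule measure_treated_uncensored_at[OF unit])
  show "measure (unit_measure n) (control_uncensored_at t) = (1 - p1 n) * Gsurv (Q n) False t"
    by (rule measure_control_uncensored_at[OF unit])
  show "measure (unit_measure n) (uncensored_at t) = p1 n * Gsurv (Q n) True t + (1 - p1 n) * Gsurv (Q n) False t"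
    by (rule measure_uncensored_at[OF unit])
qed

lemma count_measurable:
  "B \<in> sets (unit_measure n) \<Longrightarrow> (\<lambda>\<omega>. real (card {i. i < n \<and> P i \<and> \<omega> i \<in> B})) \<in> borel_measurable (M n)"
  unfolding M_eq_PiM by (rule PiM_count_hoeffding(1)[OF prob_space_unit])

lemma expectation_count:
  "B \<in> sets (unit_measure n) \<Longrightarrow>
    (\<integral>\<omega>. real (card {i. i < n \<and> P i \<and> \<omega> i \<in> B}) \<partial>M n) = real (card {i. i < n \<and> P i}) * measure (unit_measure n) B"
  unfolding M_eq_PiM by (rule PiM_count_hoeffding(2)[OF prob_space_unit])

lemma N1_eq: "N1 n (T1 n) (T0 n) k \<omega>
    = card {i. i < n \<and> event_time k n \<le> T0 n i \<and> \<omega> i \<in> treated_uncensored_at (event_time k n)}"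
  by (intro N1_eq_card H0)

lemma N0_eq: "N0 n (T1 n) (T0 n) k \<omega>
    = card {i. i < n \<and> event_time k n \<le> T0 n i \<and> \<omega> i \<in> control_uncensored_at (event_time k n)}"
  by (intro N0_eq_card H0)

lemma N1_add_N0_eq: "N1 n (T1 n) (T0 n) k \<omega> + N0 n (T1 n) (T0 n) k \<omega>
    = card {i. i < n \<and> event_time k n \<le> T0 n i \<and> \<omega> i \<in> uncensored_at (event_time k n)}"
  by (intro N1_add_N0_eq_card H0)

lemma Dk_eq: "Dk n (T1 n) (T0 n) k \<omega>
    = card {i. i < n \<and> T0 n i = event_time k n \<and> \<omega> i \<in> uncensored_at (event_time k n)}"
  by (intro Dk_eq_card H0)

lemma
  shows N1_measurable [measurable]: "(\<lambda>\<omega>. real (N1 n (T1 n) (T0 n) k \<omega>)) \<in> borel_measurable (M n)"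
    and N0_measurable [measurable]: "(\<lambda>\<omega>. real (N0 n (T1 n) (T0 n) k \<omega>)) \<in> borel_measurable (M n)"
    and Dk_measurable [measurable]: "(\<lambda>\<omega>. real (Dk n (T1 n) (T0 n) k \<omega>)) \<in> borel_measurable (M n)"
  unfolding N1_eq N0_eq Dk_eq by (rule count_measurable unit_sets)+

lemma expectation_N1:
  "(\<integral>\<omega>. real (N1 n (T1 n) (T0 n) k \<omega>) \<partial>M n) = real (ncnt n (T0 n) k) * (p1 n * G1 k n)"
  unfolding N1_eq expectation_count[OF unit_sets(1)] measure_unit ncnt_def ..

lemma expectation_N0:
  "(\<integral>\<omega>. real (N0 n (T1 n) (T0 n) k \<omega>) \<partial>M n) = real (ncnt n (T0 n) k) * ((1 - p1 n) * G0 k n)"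
  unfolding N0_eq expectation_count[OF unit_sets(2)] measure_unit ncnt_def ..

lemma counts_le:
  shows "Dk n (T1 n) (T0 n) k \<omega> \<le> N1 n (T1 n) (T0 n) k \<omega> + N0 n (T1 n) (T0 n) k \<omega>"
    and "N1 n (T1 n) (T0 n) k \<omega> + N0 n (T1 n) (T0 n) k \<omega> \<le> n"
    and "Dk n (T1 n) (T0 n) k \<omega> \<le> dcnt n (T0 n) k"
    and "N1 n (T1 n) (T0 n) k \<omega> + N0 n (T1 n) (T0 n) k \<omega> + dcnt n (T0 n) k
      \<le> ncnt n (T0 n) k + Dk n (T1 n) (T0 n) k \<omega>"
proof -
  let ?t = "event_time k n"
  show "Dk n (T1 n) (T0 n) k \<omega> \<le> N1 n (T1 n) (T0 n) k \<omega> + N0 n (T1 n) (T0 n) k \<omega>"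
    unfolding Dk_eq N1_add_N0_eq by (intro card_mono) auto
  show "N1 n (T1 n) (T0 n) k \<omega> + N0 n (T1 n) (T0 n) k \<omega> \<le> n"
  proof -
    have "card {i. i < n \<and> ?t \<le> T0 n i \<and> \<omega> i \<in> uncensored_at ?t} \<le> card {..<n}"
      by (intro card_mono) auto
    then show ?thesis
      unfolding N1_add_N0_eq by simp
  qed
  show "Dk n (T1 n) (T0 n) k \<omega> \<le> dcnt n (T0 n) k"
    unfolding Dk_eq dcnt_def by (intro card_mono) auto
  have "ncnt n (T0 n) k = dcnt n (T0 n) k + card {i. i < n \<and> ?t < T0 n i}"
    using card_ge_split[of n ?t "T0 n" "\<lambda>_. True"] by (simp add: ncnt_def dcnt_def)
  moreover have "N1 n (T1 n) (T0 n) k \<omega> + N0 n (T1 n) (T0 n) k \<omega>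
      = Dk n (T1 n) (T0 n) k \<omega> + card {i. i < n \<and> ?t < T0 n i \<and> \<omega> i \<in> uncensored_at ?t}"
    using card_ge_split[of n ?t "T0 n" "\<lambda>i. \<omega> i \<in> uncensored_at ?t"] by (simp add: N1_add_N0_eq Dk_eq)
  moreover have "card {i. i < n \<and> ?t < T0 n i \<and> \<omega> i \<in> uncensored_at ?t} \<le> card {i. i < n \<and> ?t < T0 n i}"
    by (intro card_mono) auto
  ultimately show "N1 n (T1 n) (T0 n) k \<omega> + N0 n (T1 n) (T0 n) k \<omega> + dcnt n (T0 n) k
      \<le> ncnt n (T0 n) k + Dk n (T1 n) (T0 n) k \<omega>"
    by linarith
qed

lemma V_bounds:
  shows "0 \<le> V k n \<omega>" and "V k n \<omega> \<le> N1 n (T1 n) (T0 n) k \<omega>" and "V k n \<omega> \<le> N0 n (T1 n) (T0 n) k \<omega>"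
    and "V k n \<omega> \<le> dcnt n (T0 n) k" and "V k n \<omega> \<le> real (ncnt n (T0 n) k) - dcnt n (T0 n) k"
    and "V k n \<omega> \<le> n" and "0 < V k n \<omega> \<Longrightarrow> 1 / (2 * real n) \<le> V k n \<omega>"
proof -
  note le = counts_le[of n k \<omega>]
  note V = hypergeom_variance_bounds[OF le(1), folded Vk_eq_hypergeom_variance]
  show "0 \<le> V k n \<omega>" "V k n \<omega> \<le> N1 n (T1 n) (T0 n) k \<omega>" "V k n \<omega> \<le> N0 n (T1 n) (T0 n) k \<omega>"
    using V(1,4,5) .
  show "V k n \<omega> \<le> dcnt n (T0 n) k" "V k n \<omega> \<le> real (ncnt n (T0 n) k) - dcnt n (T0 n) k"
    using V(2,3) le(3,4) by linarith+
  show "V k n \<omega> \<le> n"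
    using V(4) le(2) by linarith
  assume "0 < V k n \<omega>"
  then have "0 < N1 n (T1 n) (T0 n) k \<omega> + N0 n (T1 n) (T0 n) k \<omega>"
    using V(4) by linarith
  with le(2) have "1 / (2 * real n) \<le> 1 / (2 * real (N1 n (T1 n) (T0 n) k \<omega> + N0 n (T1 n) (T0 n) k \<omega>))"
    by (intro divide_left_mono mult_left_mono) auto
  then show "1 / (2 * real n) \<le> V k n \<omega>"
    using V(6)[OF \<open>0 < V k n \<omega>\<close>] by linarith
qed

lemma V_measurable [measurable]: "V k n \<in> borel_measurable (M n)"
  unfolding Vk_def Let_def by measurable

lemma V_div_eq: "V k n \<omega> / n = hypergeom_variance (N1 n (T1 n) (T0 n) k \<omega> / n) (N0 n (T1 n) (T0 n) k \<omega> / n)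
    (Dk n (T1 n) (T0 n) k \<omega> / n) (1 / n)"
  by (simp add: Vk_eq_hypergeom_variance hypergeom_variance_divide)

lemma N1_fraction_exp_concentrated:
  assumes "(\<lambda>n. real (ncnt n (T0 n) k) / n * (p1 n * G1 k n)) \<longlonglongrightarrow> \<alpha>"
  shows "exp_concentrated M (\<lambda>n \<omega>. real (N1 n (T1 n) (T0 n) k \<omega>) / n) \<alpha>"
  unfolding M_eq_PiM N1_eq
  by (rule exp_concentrated_count_fraction[where P="\<lambda>n i. event_time k n \<le> T0 n i"
        and B="\<lambda>n. treated_uncensored_at (event_time k n)", OF prob_space_unit unit_sets(1)])
     (use assms in \<open>simp add: measure_unit ncnt_def\<close>)

lemma N0_fraction_exp_concentrated:
  assumes "(\<lambda>n. real (ncnt n (T0 n) k) / n * ((1 - p1 n) * G0 k n)) \<longlonglongrightarrow> \<alpha>"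
  shows "exp_concentrated M (\<lambda>n \<omega>. real (N0 n (T1 n) (T0 n) k \<omega>) / n) \<alpha>"
  unfolding M_eq_PiM N0_eq
  by (rule exp_concentrated_count_fraction[where P="\<lambda>n i. event_time k n \<le> T0 n i"
        and B="\<lambda>n. control_uncensored_at (event_time k n)", OF prob_space_unit unit_sets(2)])
     (use assms in \<open>simp add: measure_unit ncnt_def\<close>)

lemma Dk_fraction_exp_concentrated:
  assumes "(\<lambda>n. real (dcnt n (T0 n) k) / n * (p1 n * G1 k n + (1 - p1 n) * G0 k n)) \<longlonglongrightarrow> \<alpha>"
  shows "exp_concentrated M (\<lambda>n \<omega>. real (Dk n (T1 n) (T0 n) k \<omega>) / n) \<alpha>"
  unfolding M_eq_PiM Dk_eq
  by (rule exp_concentrated_count_fraction[where P="\<lambda>n i. T0 n i = event_time k n"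
        and B="\<lambda>n. uncensored_at (event_time k n)", OF prob_space_unit unit_sets(3)])
     (use assms in \<open>simp add: measure_unit dcnt_def\<close>)

lemma V_div_exp_concentrated:
  assumes risk: "(\<lambda>n. real (ncnt n (T0 n) k) / n) \<longlonglongrightarrow> \<rho>"
    and deaths: "(\<lambda>n. real (dcnt n (T0 n) k) / n) \<longlonglongrightarrow> \<delta>"
    and p1: "p1 \<longlonglongrightarrow> \<pi>" and G1: "G1 k \<longlonglongrightarrow> \<gamma>1" and G0: "G0 k \<longlonglongrightarrow> \<gamma>0"
    and pos: "0 < \<rho> * (\<pi> * \<gamma>1) + \<rho> * ((1 - \<pi>) * \<gamma>0)"
  shows "exp_concentrated M (\<lambda>n \<omega>. V k n \<omega> / n)
    (hypergeom_variance (\<rho> * (\<pi> * \<gamma>1)) (\<rho> * ((1 - \<pi>) * \<gamma>0)) (\<delta> * (\<pi> * \<gamma>1 + (1 - \<pi>) * \<gamma>0)) 0)"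
proof -
  have "exp_concentrated M (\<lambda>n \<omega>. real (N1 n (T1 n) (T0 n) k \<omega>) / n) (\<rho> * (\<pi> * \<gamma>1))"
    by (intro N1_fraction_exp_concentrated tendsto_intros risk p1 G1)
  moreover have "exp_concentrated M (\<lambda>n \<omega>. real (N0 n (T1 n) (T0 n) k \<omega>) / n) (\<rho> * ((1 - \<pi>) * \<gamma>0))"
    by (intro N0_fraction_exp_concentrated tendsto_intros risk p1 G0)
  moreover have "exp_concentrated M (\<lambda>n \<omega>. real (Dk n (T1 n) (T0 n) k \<omega>) / n) (\<delta> * (\<pi> * \<gamma>1 + (1 - \<pi>) * \<gamma>0))"
    by (intro Dk_fraction_exp_concentrated tendsto_intros deaths p1 G1 G0)
  moreover have "exp_concentrated M (\<lambda>n _. 1 / real n) 0"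
    by (intro exp_concentrated_deterministic lim_1_over_n)
  ultimately have "exp_concentrated M
      (\<lambda>n \<omega>. (real (N1 n (T1 n) (T0 n) k \<omega>) / n, real (N0 n (T1 n) (T0 n) k \<omega>) / n,
               real (Dk n (T1 n) (T0 n) k \<omega>) / n, 1 / real n))
      (\<rho> * (\<pi> * \<gamma>1), \<rho> * ((1 - \<pi>) * \<gamma>0), \<delta> * (\<pi> * \<gamma>1 + (1 - \<pi>) * \<gamma>0), 0)"
    by (intro exp_concentrated_Pair prob_space_M)
  from exp_concentrated_compose[OF prob_space_M this
      isCont_hypergeom_variance borel_measurable_hypergeom_variance]
  show ?thesis
    using pos by (simp add: V_div_eq)
qed

lemma integrable_V: "integrable (M n) (V k n)"
proof -
  interpret prob_space "M n" by (rule prob_space_M)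
  show ?thesis
    using V_bounds(1,6) by (intro integrable_const_bound[where B="real n"]) auto
qed

lemma expectation_V_le:
  shows "(\<integral>\<omega>. V k n \<omega> \<partial>M n) \<le> real (ncnt n (T0 n) k) * (p1 n * G1 k n)"
    and "(\<integral>\<omega>. V k n \<omega> \<partial>M n) \<le> real (ncnt n (T0 n) k) * ((1 - p1 n) * G0 k n)"
    and "(\<integral>\<omega>. V k n \<omega> \<partial>M n) \<le> dcnt n (T0 n) k"
    and "(\<integral>\<omega>. V k n \<omega> \<partial>M n) \<le> real (ncnt n (T0 n) k) - dcnt n (T0 n) k"
proof -
  interpret prob_space "M n" by (rule prob_space_M)
  have N_le: "N1 n (T1 n) (T0 n) k \<omega> \<le> n" "N0 n (T1 n) (T0 n) k \<omega> \<le> n" for \<omega>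
    using counts_le(2)[of n k \<omega>] by linarith+
  have integrable_N: "integrable (M n) (\<lambda>\<omega>. real (N1 n (T1 n) (T0 n) k \<omega>))"
    "integrable (M n) (\<lambda>\<omega>. real (N0 n (T1 n) (T0 n) k \<omega>))"
    by (rule integrable_const_bound[where B="real n"], use N_le in simp, measurable)+
  show "(\<integral>\<omega>. V k n \<omega> \<partial>M n) \<le> real (ncnt n (T0 n) k) * (p1 n * G1 k n)"
    unfolding expectation_N1[symmetric] using integrable_V integrable_N(1) V_bounds(2)
    by (intro integral_mono) auto
  show "(\<integral>\<omega>. V k n \<omega> \<partial>M n) \<le> real (ncnt n (T0 n) k) * ((1 - p1 n) * G0 k n)"
    unfolding expectation_N0[symmetric] using integrable_V integrable_N(2) V_bounds(3)
    by (intro integral_mono) auto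
  show "(\<integral>\<omega>. V k n \<omega> \<partial>M n) \<le> dcnt n (T0 n) k"
    using integral_mono[OF integrable_V integrable_const V_bounds(4)] by (simp add: prob_space)
  show "(\<integral>\<omega>. V k n \<omega> \<partial>M n) \<le> real (ncnt n (T0 n) k) - dcnt n (T0 n) k"
    using integral_mono[OF integrable_V integrable_const V_bounds(5)] by (simp add: prob_space)
qed

end

section \<open>Asymptotics under Condition 2\<close>

locale logrank_asymptotics = null_population +
  fixes K :: nat
  assumes cond2: "condition2 p1 T0 Q K"
begin

abbreviation death_limit :: "nat \<Rightarrow> real" where
  "death_limit j \<equiv> lim (\<lambda>n. real (dcnt n (T0 n) j) / n)"

lemma
  assumes "k \<in> {1..K}"
  shows death_fraction_tendsto: "(\<lambda>n. real (dcnt n (T0 n) k) / n) \<longlonglongrightarrow> death_limit k"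
    and G1_tendsto: "G1 k \<longlonglongrightarrow> lim (G1 k)"
    and G0_tendsto: "G0 k \<longlonglongrightarrow> lim (G0 k)"
  using cond2 assms unfolding condition2_def by (auto simp: convergent_LIMSEQ_iff)

lemma death_limit_nonneg: "k \<in> {1..K} \<Longrightarrow> 0 \<le> death_limit k"
  by (rule tendsto_lowerbound[OF death_fraction_tendsto]) auto

lemma G_limits_nonneg:
  assumes "k \<in> {1..K}"
  shows "0 \<le> lim (G1 k)" "0 \<le> lim (G0 k)"
  by (rule tendsto_lowerbound[OF G1_tendsto[OF assms]] tendsto_lowerbound[OF G0_tendsto[OF assms]];
      simp add: Gsurv_def)+

lemma risk_fraction_tendsto:
  assumes k: "k \<in> {1..K}"
  shows "(\<lambda>n. real (ncnt n (T0 n) k) / n) \<longlonglongrightarrow> (\<Sum>j=k..K. death_limit j)"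
proof -
  have "\<forall>\<^sub>F n in sequentially. card (T0 n ` {..<n}) = K"
    using cond2 by (simp add: condition2_def)
  then have "\<forall>\<^sub>F n in sequentially. (\<Sum>j=k..K. real (dcnt n (T0 n) j) / n) = real (ncnt n (T0 n) k) / n"
    by eventually_elim (use k in \<open>simp add: ncnt_eq_sum_dcnt sum_divide_distrib\<close>)
  moreover have "(\<lambda>n. \<Sum>j=k..K. real (dcnt n (T0 n) j) / n) \<longlonglongrightarrow> (\<Sum>j=k..K. death_limit j)"
    using k by (intro tendsto_sum death_fraction_tendsto) auto
  ultimately show ?thesis
    by (rule Lim_transform_eventually[rotated])
qed

lemma death_limit_le_risk_limit: "k \<in> {1..K} \<Longrightarrow> death_limit k \<le> (\<Sum>j=k..K. death_limit j)"
  using death_limit_nonneg by (intro member_le_sum) auto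

lemma hrate_tendsto:
  assumes k: "k \<in> {1..K}" and pos: "0 < (\<Sum>j=k..K. death_limit j)"
  shows "(\<lambda>n. hrate n (T0 n) k) \<longlonglongrightarrow> death_limit k / (\<Sum>j=k..K. death_limit j)"
proof -
  have "(\<lambda>n. (real (dcnt n (T0 n) k) / n) / (real (ncnt n (T0 n) k) / n))
      \<longlonglongrightarrow> death_limit k / (\<Sum>j=k..K. death_limit j)"
    using pos by (intro tendsto_divide death_fraction_tendsto[OF k] risk_fraction_tendsto[OF k]) auto
  moreover have "\<forall>\<^sub>F n in sequentially.
      (real (dcnt n (T0 n) k) / n) / (real (ncnt n (T0 n) k) / n) = hrate n (T0 n) k"
    using eventually_gt_at_top[of 0] by eventually_elim (simp add: hrate_def)
  ultimately show ?thesis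
    by (rule Lim_transform_eventually)
qed

lemma p1_limit:
  obtains \<pi> where "p1 \<longlonglongrightarrow> \<pi>" "0 < \<pi>" "\<pi> < 1"
proof -
  obtain \<pi> \<pi>' where "p1 \<longlonglongrightarrow> \<pi>" "0 < \<pi>" "(\<lambda>n. 1 - p1 n) \<longlonglongrightarrow> \<pi>'" "0 < \<pi>'"
    using cond2 unfolding condition2_def by blast
  moreover have "\<pi>' = 1 - \<pi>"
    using tendsto_unique[OF _ \<open>(\<lambda>n. 1 - p1 n) \<longlonglongrightarrow> \<pi>'\<close> tendsto_diff[OF tendsto_const \<open>p1 \<longlonglongrightarrow> \<pi>\<close>]] by simp
  ultimately show ?thesis
    using that by auto
qed

lemma Kzero_exp_concentrated:
  assumes "k \<in> Kzero T0 Q K"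
  obtains L where "0 < L" "exp_concentrated M (\<lambda>n \<omega>. V k n \<omega> / n) L"
proof -
  define \<rho> where "\<rho> = (\<Sum>j=k..K. death_limit j)"
  define \<delta> where "\<delta> = death_limit k"
  have k: "k \<in> {1..K}" and "0 < \<delta>" "lim (\<lambda>n. hrate n (T0 n) k) < 1"
    and "0 < lim (G1 k)" "0 < lim (G0 k)"
    using assms by (auto simp: Kzero_def \<delta>_def)
  have "\<delta> \<le> \<rho>"
    unfolding \<delta>_def \<rho>_def using k by (rule death_limit_le_risk_limit)
  with \<open>0 < \<delta>\<close> have "0 < \<rho>" by simp
  have "lim (\<lambda>n. hrate n (T0 n) k) = \<delta> / \<rho>"
    unfolding \<delta>_def \<rho>_def by (intro limI hrate_tendsto k) (simp add: \<open>0 < \<rho>\<close>[unfolded \<rho>_def])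
  with \<open>lim (\<lambda>n. hrate n (T0 n) k) < 1\<close> \<open>0 < \<rho>\<close> have "\<delta> < \<rho>"
    by (simp add: divide_less_eq)
  obtain \<pi> where \<pi>: "p1 \<longlonglongrightarrow> \<pi>" "0 < \<pi>" "\<pi> < 1"
    by (rule p1_limit)
  define s where "s = \<pi> * lim (G1 k) + (1 - \<pi>) * lim (G0 k)"
  have "0 < s"
    unfolding s_def using \<pi> \<open>0 < lim (G1 k)\<close> \<open>0 < lim (G0 k)\<close> by (simp add: add_pos_pos)
  have "exp_concentrated M (\<lambda>n \<omega>. V k n \<omega> / n)
    (hypergeom_variance (\<rho> * (\<pi> * lim (G1 k))) (\<rho> * ((1 - \<pi>) * lim (G0 k))) (\<delta> * s) 0)"
    unfolding s_def \<rho>_def \<delta>_def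
    using \<pi> \<open>0 < lim (G1 k)\<close> \<open>0 < lim (G0 k)\<close> \<open>0 < \<rho>\<close>
    by (intro V_div_exp_concentrated risk_fraction_tendsto death_fraction_tendsto G1_tendsto G0_tendsto k)
       (simp_all add: \<rho>_def add_pos_pos)
  moreover have "0 < hypergeom_variance (\<rho> * (\<pi> * lim (G1 k))) (\<rho> * ((1 - \<pi>) * lim (G0 k))) (\<delta> * s) 0"
  proof (rule hypergeom_variance_pos)
    have "\<rho> * (\<pi> * lim (G1 k)) + \<rho> * ((1 - \<pi>) * lim (G0 k)) = \<rho> * s"
      by (simp add: s_def algebra_simps)
    then show "\<delta> * s < \<rho> * (\<pi> * lim (G1 k)) + \<rho> * ((1 - \<pi>) * lim (G0 k))"
      using \<open>\<delta> < \<rho>\<close> \<open>0 < s\<close> by simp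
  qed (use \<pi> \<open>0 < lim (G1 k)\<close> \<open>0 < lim (G0 k)\<close> \<open>0 < \<rho>\<close> \<open>0 < \<delta>\<close> \<open>0 < s\<close> in simp_all)
  ultimately show ?thesis
    using that by blast
qed

lemma not_Kzero_expectation_tendsto_0:
  assumes k: "k \<in> {1..K}" and "k \<notin> Kzero T0 Q K"
  shows "(\<lambda>n. (\<integral>\<omega>. V k n \<omega> \<partial>M n) / n) \<longlonglongrightarrow> 0"
proof -
  define \<rho> where "\<rho> = (\<Sum>j=k..K. death_limit j)"
  define \<delta> where "\<delta> = death_limit k"
  obtain \<pi> where \<pi>: "p1 \<longlonglongrightarrow> \<pi>" "0 < \<pi>" "\<pi> < 1"
    by (rule p1_limit)
  define u where "u n = min (min (real (dcnt n (T0 n) k) / n) (real (ncnt n (T0 n) k) / n - real (dcnt n (T0 n) k) / n))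
    (min (real (ncnt n (T0 n) k) / n * (p1 n * G1 k n)) (real (ncnt n (T0 n) k) / n * ((1 - p1 n) * G0 k n)))" for n
  have u_tendsto: "u \<longlonglongrightarrow> min (min \<delta> (\<rho> - \<delta>)) (min (\<rho> * (\<pi> * lim (G1 k))) (\<rho> * ((1 - \<pi>) * lim (G0 k))))"
    unfolding u_def \<rho>_def \<delta>_def
    by (intro tendsto_intros death_fraction_tendsto risk_fraction_tendsto G1_tendsto G0_tendsto \<pi>(1) k)
  have "min (min \<delta> (\<rho> - \<delta>)) (min (\<rho> * (\<pi> * lim (G1 k))) (\<rho> * ((1 - \<pi>) * lim (G0 k)))) = 0"
  proof -
    have "0 \<le> \<delta>" "\<delta> \<le> \<rho>" "0 \<le> lim (G1 k)" "0 \<le> lim (G0 k)"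
      using death_limit_nonneg[OF k] death_limit_le_risk_limit[OF k] G_limits_nonneg[OF k]
      by (simp_all add: \<rho>_def \<delta>_def)
    moreover have "\<delta> = 0 \<or> lim (G1 k) = 0 \<or> lim (G0 k) = 0 \<or> \<rho> \<le> \<delta>"
    proof (rule ccontr)
      assume "\<not> ?thesis"
      with \<open>0 \<le> \<delta>\<close> \<open>0 \<le> lim (G1 k)\<close> \<open>0 \<le> lim (G0 k)\<close>
      have "0 < \<delta>" "\<delta> < \<rho>" "0 < lim (G1 k)" "0 < lim (G0 k)"
        by auto
      moreover have "lim (\<lambda>n. hrate n (T0 n) k) = \<delta> / \<rho>"
        using \<open>0 < \<delta>\<close> \<open>\<delta> < \<rho>\<close> unfolding \<delta>_def \<rho>_def
        by (intro limI hrate_tendsto k) simp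
      ultimately have "k \<in> Kzero T0 Q K"
        using k by (simp add: Kzero_def \<delta>_def)
      with assms(2) show False ..
    qed
    ultimately have "0 \<le> \<delta>" "0 \<le> \<rho> - \<delta>" "0 \<le> \<rho> * (\<pi> * lim (G1 k))" "0 \<le> \<rho> * ((1 - \<pi>) * lim (G0 k))"
      and "\<delta> = 0 \<or> \<rho> - \<delta> = 0 \<or> \<rho> * (\<pi> * lim (G1 k)) = 0 \<or> \<rho> * ((1 - \<pi>) * lim (G0 k)) = 0"
      using \<pi> by auto
    moreover have min_eq_0: "min (min x y) (min z w) = 0"
      if "0 \<le> x" "0 \<le> y" "0 \<le> z" "0 \<le> w" "x = 0 \<or> y = 0 \<or> z = 0 \<or> w = 0" for x y z w :: real
      using that by (auto simp: min_def)
    ultimately show ?thesis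
      by blast
  qed
  with u_tendsto have u_tendsto_0: "u \<longlonglongrightarrow> 0"
    by (simp only:)
  have upper: "(\<integral>\<omega>. V k n \<omega> \<partial>M n) / n \<le> u n" for n
    using expectation_V_le[where k=k and n=n, THEN divide_right_mono, of "real n"]
    by (simp add: u_def diff_divide_distrib)
  have lower: "0 \<le> (\<integral>\<omega>. V k n \<omega> \<partial>M n) / n" for n
    using V_bounds(1) by (intro divide_nonneg_nonneg integral_nonneg) auto
  show ?thesis
    by (rule tendsto_sandwich[OF always_eventually always_eventually tendsto_const u_tendsto_0])
       (use lower upper in blast)+
qed

lemma Kzero_asymptotics:
  assumes "k \<in> Kzero T0 Q K"
  shows "\<exists>L>0. (\<lambda>n. (\<integral>\<omega>. V k n \<omega> \<partial>M n) / n) \<longlonglongrightarrow> L"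
    and "\<And>e. 0 < e \<Longrightarrow>
      (\<lambda>n. measure (M n) {\<omega> \<in> space (M n). e < \<bar>V k n \<omega> / n - (\<integral>v. V k n v \<partial>M n) / n\<bar>}) \<longlonglongrightarrow> 0"
    and "(\<lambda>n. \<integral>\<omega>. (if 0 < V k n \<omega> then 1 / sqrt (V k n \<omega>) else 0) \<partial>M n) \<longlonglongrightarrow> 0"
    and "(\<lambda>n. measure (M n) {\<omega> \<in> space (M n). V k n \<omega> = 0}) \<longlonglongrightarrow> 0"
proof -
  obtain L where "0 < L" and concentrated: "exp_concentrated M (\<lambda>n \<omega>. V k n \<omega> / n) L"
    using Kzero_exp_concentrated[OF assms] .
  interpret growth: linear_growth M "V k" L
    by (intro linear_growth.intro) (use prob_space_M V_bounds(1,6) concentrated \<open>0 < L\<close> in auto)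
  show "\<exists>L>0. (\<lambda>n. (\<integral>\<omega>. V k n \<omega> \<partial>M n) / n) \<longlonglongrightarrow> L"
    using growth.expectation_div_tendsto \<open>0 < L\<close> by blast
  show "\<And>e. 0 < e \<Longrightarrow>
      (\<lambda>n. measure (M n) {\<omega> \<in> space (M n). e < \<bar>V k n \<omega> / n - (\<integral>v. V k n v \<partial>M n) / n\<bar>}) \<longlonglongrightarrow> 0"
    by (rule growth.tendsto_measure_deviation_from_mean)
  show "(\<lambda>n. \<integral>\<omega>. (if 0 < V k n \<omega> then 1 / sqrt (V k n \<omega>) else 0) \<partial>M n) \<longlonglongrightarrow> 0"
    by (rule growth.inverse_sqrt_expectation_tendsto_0) (rule V_bounds(7))
  show "(\<lambda>n. measure (M n) {\<omega> \<in> space (M n). V k n \<omega> = 0}) \<longlonglongrightarrow> 0"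
    by (rule growth.tendsto_measure_eq_0)
qed

lemma not_Kzero_asymptotics:
  assumes "k \<in> {1..K}" "k \<notin> Kzero T0 Q K"
  shows "(\<lambda>n. (\<integral>\<omega>. V k n \<omega> \<partial>M n) / n) \<longlonglongrightarrow> 0"
    and "\<And>e. 0 < e \<Longrightarrow> (\<lambda>n. measure (M n) {\<omega> \<in> space (M n). e < \<bar>V k n \<omega> / n\<bar>}) \<longlonglongrightarrow> 0"
proof -
  show expectation: "(\<lambda>n. (\<integral>\<omega>. V k n \<omega> \<partial>M n) / n) \<longlonglongrightarrow> 0"
    using assms by (rule not_Kzero_expectation_tendsto_0)
  show "(\<lambda>n. measure (M n) {\<omega> \<in> space (M n). e < \<bar>V k n \<omega> / n\<bar>}) \<longlonglongrightarrow> 0" if "0 < e" for e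
    using prob_space_M integrable_V V_bounds(1) expectation that
    by (intro tendsto_measure_gt_of_expectation_tendsto_0) auto
qed

end

theorem lemmaA16:
  fixes p1 :: "nat \<Rightarrow> real"
    and T1 T0 :: "nat \<Rightarrow> nat \<Rightarrow> real"
    and Q :: "nat \<Rightarrow> (ereal \<times> ereal) measure"
    and K :: nat
  assumes p1: "\<forall>n. 0 < p1 n \<and> p1 n < 1"
    and Qprob: "\<forall>n. prob_space (Q n)"
    and Qsets: "\<forall>n. sets (Q n) = sets borel"
    and Qnonneg: "\<forall>n. AE c in Q n. 0 \<le> fst c \<and> 0 \<le> snd c"
    and Tnonneg: "\<forall>n i. i < n \<longrightarrow> 0 \<le> T1 n i \<and> 0 \<le> T0 n i"
    and H0: "\<forall>n i. i < n \<longrightarrow> T1 n i = T0 n i"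
    and cond2: "condition2 p1 T0 Q K"
  shows "\<forall>k\<in>{1..K}.
     (k \<in> Kzero T0 Q K \<longrightarrow>
        (\<exists>L>0. (\<lambda>n. (\<integral>w. Vk n (T1 n) (T0 n) k w \<partial>popM n (p1 n) (Q n)) / real n) \<longlonglongrightarrow> L) \<and>
        (\<forall>e>0. (\<lambda>n. measure (popM n (p1 n) (Q n))
            {w \<in> space (popM n (p1 n) (Q n)).
               \<bar>Vk n (T1 n) (T0 n) k w / real n
                - (\<integral>v. Vk n (T1 n) (T0 n) k v \<partial>popM n (p1 n) (Q n)) / real n\<bar> > e})
          \<longlonglongrightarrow> 0) \<and>
        (\<lambda>n. \<integral>w. (if Vk n (T1 n) (T0 n) k w > 0 then 1 / sqrt (Vk n (T1 n) (T0 n) k w) else 0)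
              \<partial>popM n (p1 n) (Q n)) \<longlonglongrightarrow> 0 \<and>
        (\<lambda>n. measure (popM n (p1 n) (Q n))
            {w \<in> space (popM n (p1 n) (Q n)). Vk n (T1 n) (T0 n) k w = 0}) \<longlonglongrightarrow> 0) \<and>
     (k \<notin> Kzero T0 Q K \<longrightarrow>
        (\<lambda>n. (\<integral>w. Vk n (T1 n) (T0 n) k w \<partial>popM n (p1 n) (Q n)) / real n) \<longlonglongrightarrow> 0 \<and>
        (\<forall>e>0. (\<lambda>n. measure (popM n (p1 n) (Q n))
            {w \<in> space (popM n (p1 n) (Q n)). \<bar>Vk n (T1 n) (T0 n) k w / real n\<bar> > e})
          \<longlonglongrightarrow> 0))"
proof -
  have "logrank_asymptotics p1 T1 T0 Q K"
    using p1 Qprob Qsets H0 cond2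
    by (intro logrank_asymptotics.intro null_population.intro logrank_asymptotics_axioms.intro)
       (auto simp: less_imp_le)
  then interpret logrank_asymptotics p1 T1 T0 Q K .
  show ?thesis
    using Kzero_asymptotics not_Kzero_asymptotics by blast
qed

end
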